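(* Let $(M,g)$ be an $n$-dimensional Lorentzian spacetime with $n\ge 4$ admitting a null vector field $\boldsymbol{\ell}$ with $L_{i0}=0$ and $L_{ij}=0$ for all $i,j$ (a Kundt spacetime), and assume $R_{00}=0$ and $R_{0i}=0$ for all $i$. Then the spacetime is of Weyl type II or more special, i.e. $C_{0i0j}=0$, $C_{010i}=0$ and $C_{0ijk}=0$ for all $i,j,k$.
   Context: Complete $\boldsymbol{\ell}$ to a null frame $\{\boldsymbol{n},\boldsymbol{\ell},\boldsymbol{m}^{(2)},\dots,\boldsymbol{m}^{(n-1)}\}$ with $\ell^a\ell_a=n^an_a=\ell^a m^{(i)}_a=n^a m^{(i)}_a=0$, $\ell^a n_a=1$, $m^{(i)a}m^{(j)}_a=\delta_{ij}$; indices $i,j,k$ range over $2,\dots,n-1$. Frame components: an index $0$ denotes contraction with $\boldsymbol{\ell}$, an index $1$ contraction with $\boldsymbol{n}$, an index $i$ contraction with $\boldsymbol{m}^{(i)}$. Thus $L_{i0}=\ell_{a;b}m^{(i)a}\ell^b$, $L_{ij}=\ell_{a;b}m^{(i)a}m^{(j)b}$, $R_{00}=R_{ab}\ell^a\ell^b$, $R_{0i}=R_{ab}\ell^a m^{(i)b}$, and e.g. $C_{010i}=C_{abcd}\ell^a n^b\ell^c m^{(i)d}$, $C_{0ijk}=C_{abcd}\ell^a m^{(i)b}m^{(j)c}m^{(k)d}$ for the Weyl tensor $C$. The spacetime is of type II or more special (with respect to $\boldsymbol{\ell}$) when all Weyl frame components of boost weight $2$ and $1$ vanish, i.e. $C_{0i0j}=C_{010i}=C_{0ijk}=0$.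 *)

theory Defs
  imports "HOL-Analysis.Analysis"
begin

text \<open>Local coordinate description of a spacetime: an open set U of R^n (coordinates
 indexed by the finite type 'n), a metric g given by its component matrix g x $ a $ b.\<close>

definition pd :: "'n::finite \<Rightarrow> (real^'n \<Rightarrow> real) \<Rightarrow> real^'n \<Rightarrow> real" where
  "pd i f x = deriv (\<lambda>t. f (x + t *\<^sub>R axis i 1)) 0"

definition smooth_on :: "(real^'n::finite) set \<Rightarrow> (real^'n \<Rightarrow> real) \<Rightarrow> bool" where
  "smooth_on U f \<longleftrightarrow> (\<forall>is. (foldr pd is f) differentiable_on U)"

definition lorentzian_matrix :: "real^'n::finite^'n \<Rightarrow> bool" where
  "lorentzian_matrix G \<longleftrightarrow> transpose G = G \<and>
     (\<exists>(P::real^'n^'n) k. invertible P \<and>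
        transpose P ** G ** P = (\<chi> a b. if a = b then (if a = k then -1 else 1) else 0))"

definition ginv :: "(real^'n::finite \<Rightarrow> real^'n^'n) \<Rightarrow> real^'n \<Rightarrow> real^'n^'n" where
  "ginv g x = matrix_inv (g x)"

definition Gamma :: "(real^'n::finite \<Rightarrow> real^'n^'n) \<Rightarrow> 'n \<Rightarrow> 'n \<Rightarrow> 'n \<Rightarrow> real^'n \<Rightarrow> real" where
  "Gamma g a b c x = (1/2) * (\<Sum>d\<in>UNIV. ginv g x $ a $ d *
      (pd b (\<lambda>y. g y $ d $ c) x + pd c (\<lambda>y. g y $ d $ b) x - pd d (\<lambda>y. g y $ b $ c) x))"

definition Riem :: "(real^'n::finite \<Rightarrow> real^'n^'n) \<Rightarrow> 'n \<Rightarrow> 'n \<Rightarrow> 'n \<Rightarrow> 'n \<Rightarrow> real^'n \<Rightarrow> real" where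
  "Riem g a b c d x = pd c (\<lambda>y. Gamma g a d b y) x - pd d (\<lambda>y. Gamma g a c b y) x
     + (\<Sum>e\<in>UNIV. Gamma g a c e x * Gamma g e d b x - Gamma g a d e x * Gamma g e c b x)"

definition Riem_low :: "(real^'n::finite \<Rightarrow> real^'n^'n) \<Rightarrow> 'n \<Rightarrow> 'n \<Rightarrow> 'n \<Rightarrow> 'n \<Rightarrow> real^'n \<Rightarrow> real" where
  "Riem_low g a b c d x = (\<Sum>e\<in>UNIV. g x $ a $ e * Riem g e b c d x)"

definition Ric :: "(real^'n::finite \<Rightarrow> real^'n^'n) \<Rightarrow> 'n \<Rightarrow> 'n \<Rightarrow> real^'n \<Rightarrow> real" where
  "Ric g b d x = (\<Sum>a\<in>UNIV. Riem g a b a d x)"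

definition scal :: "(real^'n::finite \<Rightarrow> real^'n^'n) \<Rightarrow> real^'n \<Rightarrow> real" where
  "scal g x = (\<Sum>b\<in>UNIV. \<Sum>d\<in>UNIV. ginv g x $ b $ d * Ric g b d x)"

definition Weyl :: "(real^'n::finite \<Rightarrow> real^'n^'n) \<Rightarrow> 'n \<Rightarrow> 'n \<Rightarrow> 'n \<Rightarrow> 'n \<Rightarrow> real^'n \<Rightarrow> real" where
  "Weyl g a b c d x = (let N = real CARD('n); G = g x in
     Riem_low g a b c d x
     - (G $ a $ c * Ric g b d x - G $ a $ d * Ric g b c x
        - G $ b $ c * Ric g a d x + G $ b $ d * Ric g a c x) / (N - 2)
     + scal g x * (G $ a $ c * G $ b $ d - G $ a $ d * G $ b $ c) / ((N - 1) * (N - 2)))"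

definition ip :: "(real^'n::finite \<Rightarrow> real^'n^'n) \<Rightarrow> real^'n \<Rightarrow> real^'n \<Rightarrow> real^'n \<Rightarrow> real" where
  "ip g x u v = (\<Sum>a\<in>UNIV. \<Sum>b\<in>UNIV. g x $ a $ b * u $ a * v $ b)"

definition cov_low :: "(real^'n::finite \<Rightarrow> real^'n^'n) \<Rightarrow> (real^'n \<Rightarrow> real^'n) \<Rightarrow> 'n \<Rightarrow> 'n \<Rightarrow> real^'n \<Rightarrow> real" where
  "cov_low g l a b x = pd b (\<lambda>y. \<Sum>c\<in>UNIV. g y $ a $ c * l y $ c) x
     - (\<Sum>c\<in>UNIV. Gamma g c a b x * (\<Sum>e\<in>UNIV. g x $ c $ e * l x $ e))"

text \<open>Frame components: contraction of a 2-tensor / 4-tensor with vectors.\<close>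
definition contr2 :: "('n::finite \<Rightarrow> 'n \<Rightarrow> real) \<Rightarrow> real^'n \<Rightarrow> real^'n \<Rightarrow> real" where
  "contr2 T u v = (\<Sum>a\<in>UNIV. \<Sum>b\<in>UNIV. T a b * u $ a * v $ b)"

definition contr4 :: "('n::finite \<Rightarrow> 'n \<Rightarrow> 'n \<Rightarrow> 'n \<Rightarrow> real) \<Rightarrow> real^'n \<Rightarrow> real^'n \<Rightarrow> real^'n \<Rightarrow> real^'n \<Rightarrow> real" where
  "contr4 T u v w z = (\<Sum>a\<in>UNIV. \<Sum>b\<in>UNIV. \<Sum>c\<in>UNIV. \<Sum>d\<in>UNIV.
      T a b c d * u $ a * v $ b * w $ c * z $ d)"

definition null_frame :: "(real^'n::finite \<Rightarrow> real^'n^'n) \<Rightarrow> real^'n \<Rightarrow> real^'n \<Rightarrow> real^'n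
     \<Rightarrow> (nat \<Rightarrow> real^'n) \<Rightarrow> bool" where
  "null_frame g x l nv m \<longleftrightarrow>
     ip g x l l = 0 \<and> ip g x nv nv = 0 \<and> ip g x l nv = 1 \<and>
     (\<forall>i\<in>{2..CARD('n)-1}. ip g x l (m i) = 0 \<and> ip g x nv (m i) = 0) \<and>
     (\<forall>i\<in>{2..CARD('n)-1}. \<forall>j\<in>{2..CARD('n)-1}. ip g x (m i) (m j) = (if i = j then 1 else 0))"

end

theory Submission
  imports Defs
begin

text \<open>
  Write \<open>L\<^sub>a\<^sub>b = \<ell>\<^sub>a\<^sub>;\<^sub>b\<close>. Besides the Kundt conditions, \<open>\<ell>\<^sup>a L\<^sub>a\<^sub>b = \<onehalf> (\<ell>\<cdot>\<ell>)\<^sub>,\<^sub>b = 0\<close>,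
  so \<open>L\<close> vanishes on every pair of vectors orthogonal to \<open>\<ell>\<close> and therefore has the local form
  \<open>L\<^sub>a\<^sub>b = \<ell>\<^sub>a A\<^sub>b + B\<^sub>a \<ell>\<^sub>b\<close>. By the Ricci identity \<open>\<ell>\<^sub>f R\<^sup>f\<^sub>b\<^sub>c\<^sub>d = L\<^sub>b\<^sub>c\<^sub>;\<^sub>d - L\<^sub>b\<^sub>d\<^sub>;\<^sub>c\<close>,
  and because differentiating this form only produces terms containing \<open>\<ell>\<close> or \<open>L\<close> again,
  \<open>R\<^sub>a\<^sub>b\<^sub>c\<^sub>d \<ell>\<^sup>a P\<^sup>b Q\<^sup>c S\<^sup>d = 0\<close> whenever \<open>P, Q, S \<bottom> \<ell>\<close>. Inserting \<open>R\<^sub>0\<^sub>0 = R\<^sub>0\<^sub>i = 0\<close> into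
  the Weyl decomposition gives \<open>C\<^sub>0\<^sub>i\<^sub>0\<^sub>j = C\<^sub>0\<^sub>i\<^sub>j\<^sub>k = 0\<close>. Finally, expanding
  \<open>R\<^sub>0\<^sub>i = g\<^sup>a\<^sup>e R\<^sub>e\<^sub>0\<^sub>a\<^sub>i\<close> in the null frame, antisymmetry of \<open>R\<^sub>a\<^sub>b\<^sub>c\<^sub>d\<close> in its first pair
  leaves only \<open>-R\<^sub>0\<^sub>1\<^sub>0\<^sub>i\<close>, which therefore vanishes, and with it \<open>C\<^sub>0\<^sub>1\<^sub>0\<^sub>i\<close>.
\<close>

section \<open>Partial derivatives\<close>

lemma has_derivative_along_line:
  fixes f :: "real^'n::finite \<Rightarrow> real"
  assumes "(f has_derivative D) (at (y + t *\<^sub>R v))"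
  shows "((\<lambda>s. f (y + s *\<^sub>R v)) has_real_derivative D v) (at t)"
proof -
  have "((\<lambda>s. y + s *\<^sub>R v) has_derivative (\<lambda>s. s *\<^sub>R v)) (at t)"
    by (auto intro!: derivative_eq_intros)
  from has_derivative_compose[OF this assms]
  have "((\<lambda>s. f (y + s *\<^sub>R v)) has_derivative (\<lambda>s. D (s *\<^sub>R v))) (at t)" by simp
  moreover have "(\<lambda>s. D (s *\<^sub>R v)) = (*) (D v)"
    using linear_scale[OF has_derivative_linear[OF assms]] by (simp add: fun_eq_iff)
  ultimately show ?thesis unfolding has_field_derivative_def by simp
qed

lemma pd_eq_derivative:
  fixes f :: "real^'n::finite \<Rightarrow> real"
  assumes "(f has_derivative D) (at x)"
  shows "pd i f x = D (axis i 1)"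
  unfolding pd_def
  by (rule DERIV_imp_deriv, rule has_derivative_along_line) (use assms in simp)

lemma has_real_derivative_along_axis:
  fixes f :: "real^'n::finite \<Rightarrow> real"
  assumes "f differentiable (at (y + t *\<^sub>R axis i 1))"
  shows "((\<lambda>s. f (y + s *\<^sub>R axis i 1)) has_real_derivative pd i f (y + t *\<^sub>R axis i 1)) (at t)"
proof -
  obtain D where "(f has_derivative D) (at (y + t *\<^sub>R axis i 1))"
    using assms unfolding differentiable_def by blast
  then show ?thesis using has_derivative_along_line pd_eq_derivative by metis
qed

lemma pd_cong:
  fixes f h :: "real^'n::finite \<Rightarrow> real"
  assumes "open V" "x \<in> V" "\<And>y. y \<in> V \<Longrightarrow> f y = h y"
  shows "pd i f x = pd i h x"
proof -
  let ?p = "\<lambda>t::real. x + t *\<^sub>R axis i (1::real)"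
  have "open (?p -` V)"
    by (rule continuous_open_vimage[OF assms(1)]) (intro continuous_intros)
  moreover have "0 \<in> ?p -` V" using assms(2) by simp
  ultimately have "eventually (\<lambda>t. ?p t \<in> V) (nhds 0)"
    using eventually_nhds by blast
  then have "eventually (\<lambda>t. f (?p t) = h (?p t)) (nhds 0)"
    by (rule eventually_mono) (use assms(3) in auto)
  then show ?thesis unfolding pd_def by (rule deriv_cong_ev) simp
qed

lemma pd_const: "pd i (\<lambda>y::real^'n::finite. c::real) x = 0"
  using pd_eq_derivative[OF has_derivative_const[of c "at x"]] by simp

context
  fixes f h :: "real^'n::finite \<Rightarrow> real" and x :: "real^'n"
  assumes f: "f differentiable (at x)" and h: "h differentiable (at x)"
begin

lemma pd_add: "pd i (\<lambda>y. f y + h y) x = pd i f x + pd i h x"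
proof -
  obtain Df Dh where "(f has_derivative Df) (at x)" "(h has_derivative Dh) (at x)"
    using f h unfolding differentiable_def by blast
  from pd_eq_derivative[OF has_derivative_add[OF this]] pd_eq_derivative[OF this(1)]
    pd_eq_derivative[OF this(2)] show ?thesis by simp
qed

lemma pd_diff: "pd i (\<lambda>y. f y - h y) x = pd i f x - pd i h x"
proof -
  obtain Df Dh where "(f has_derivative Df) (at x)" "(h has_derivative Dh) (at x)"
    using f h unfolding differentiable_def by blast
  from pd_eq_derivative[OF has_derivative_diff[OF this]] pd_eq_derivative[OF this(1)]
    pd_eq_derivative[OF this(2)] show ?thesis by simp
qed

lemma pd_mult: "pd i (\<lambda>y. f y * h y) x = f x * pd i h x + pd i f x * h x"
proof -
  obtain Df Dh where "(f has_derivative Df) (at x)" "(h has_derivative Dh) (at x)"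
    using f h unfolding differentiable_def by blast
  from pd_eq_derivative[OF has_derivative_mult[OF this]] pd_eq_derivative[OF this(1)]
    pd_eq_derivative[OF this(2)] show ?thesis by simp
qed

end

lemma pd_cmult:
  fixes f :: "real^'n::finite \<Rightarrow> real"
  assumes "f differentiable (at x)"
  shows "pd i (\<lambda>y. c * f y) x = c * pd i f x"
  using pd_mult[OF differentiable_const assms] by (simp add: pd_const)

lemma pd_sum:
  fixes F :: "'c \<Rightarrow> real^'n::finite \<Rightarrow> real"
  assumes "finite S" "\<And>c. c \<in> S \<Longrightarrow> F c differentiable (at x)"
  shows "pd i (\<lambda>y. \<Sum>c\<in>S. F c y) x = (\<Sum>c\<in>S. pd i (F c) x)"
proof -
  obtain D where D: "\<And>c. c \<in> S \<Longrightarrow> (F c has_derivative D c) (at x)"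
    using assms(2) unfolding differentiable_def by metis
  show ?thesis
    using pd_eq_derivative[OF has_derivative_sum[of S F D, OF D]] pd_eq_derivative[OF D] by simp
qed

fun differentiable_upto :: "nat \<Rightarrow> (real^'n::finite) set \<Rightarrow> (real^'n \<Rightarrow> real) \<Rightarrow> bool" where
  "differentiable_upto 0 U f \<longleftrightarrow> f differentiable_on U"
| "differentiable_upto (Suc k) U f \<longleftrightarrow>
     f differentiable_on U \<and> (\<forall>i. differentiable_upto k U (pd i f))"

lemma smooth_on_pd: "smooth_on U f \<Longrightarrow> smooth_on U (pd i f)"
  unfolding smooth_on_def by (metis foldr_append foldr_Cons foldr_Nil comp_id)

lemma smooth_on_imp_differentiable_upto: "smooth_on U f \<Longrightarrow> differentiable_upto k U f"
proof (induction k arbitrary: f)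
  case 0
  then show ?case unfolding smooth_on_def by (metis differentiable_upto.simps(1) foldr_Nil id_apply)
next
  case (Suc k)
  then show ?case unfolding smooth_on_def
    by (metis differentiable_upto.simps(2) foldr_Nil id_apply smooth_on_def smooth_on_pd)
qed

lemma differentiable_upto_imp_differentiable_on:
  "differentiable_upto k U f \<Longrightarrow> f differentiable_on U"
  by (cases k) auto

lemma differentiable_upto_imp_differentiable:
  "differentiable_upto k U f \<Longrightarrow> open U \<Longrightarrow> y \<in> U \<Longrightarrow> f differentiable (at y)"
  using differentiable_upto_imp_differentiable_on differentiable_on_eq_differentiable_at by blast

lemma differentiable_upto_Suc_imp_pd_differentiable:
  "differentiable_upto (Suc k) U f \<Longrightarrow> open U \<Longrightarrow> y \<in> U \<Longrightarrow> pd i f differentiable (at y)"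
  using differentiable_upto_imp_differentiable[of k U "pd i f"] by simp

lemma differentiable_upto_Suc_imp: "differentiable_upto (Suc k) U f \<Longrightarrow> differentiable_upto k U f"
proof (induction k arbitrary: f)
  case (Suc k)
  have "f differentiable_on U" "differentiable_upto (Suc k) U (pd i f)" for i
    using Suc.prems by simp_all
  then show ?case using Suc.IH by (simp only: differentiable_upto.simps) blast
qed simp

lemma differentiable_on_cong_open:
  fixes f h :: "real^'n::finite \<Rightarrow> real"
  assumes "open U" "\<And>y. y \<in> U \<Longrightarrow> f y = h y" "f differentiable_on U"
  shows "h differentiable_on U"
  using assms unfolding differentiable_on_eq_differentiable_at[OF assms(1)] differentiable_def
  by (metis has_derivative_transform_within_open)

lemma differentiable_upto_cong:
  "open U \<Longrightarrow> (\<And>y. y \<in> U \<Longrightarrow> f y = h y) \<Longrightarrow> differentiable_upto k U f \<Longrightarrow> differentiable_upto k U h"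
proof (induction k arbitrary: f h)
  case 0
  then show ?case using differentiable_on_cong_open by auto
next
  case (Suc k)
  have "y \<in> U \<Longrightarrow> pd i f y = pd i h y" for i y
    using pd_cong[OF Suc.prems(1)] Suc.prems(2) by blast
  then have "differentiable_upto k U (pd i h)" for i
    using Suc.IH[OF Suc.prems(1), of "pd i f" "pd i h"] Suc.prems(3) by simp
  then show ?case using differentiable_on_cong_open[OF Suc.prems(1,2)] Suc.prems(3) by simp
qed

lemma differentiable_upto_const: "differentiable_upto k (U::(real^'n::finite) set) (\<lambda>y. c)"
proof (induction k arbitrary: c)
  case (Suc k)
  have "pd i (\<lambda>y::real^'n. c) = (\<lambda>y. 0)" for i by (simp add: pd_const fun_eq_iff)
  with Suc show ?case by simp
qed simp

lemma differentiable_upto_add: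
  "open U \<Longrightarrow> differentiable_upto k U f \<Longrightarrow> differentiable_upto k U h \<Longrightarrow>
     differentiable_upto k U (\<lambda>y. f y + h y)"
proof (induction k arbitrary: f h)
  case 0
  then show ?case by (simp add: differentiable_on_eq_differentiable_at)
next
  case (Suc k)
  have "differentiable_upto k U (pd i (\<lambda>y. f y + h y))" for i
  proof (rule differentiable_upto_cong[OF Suc.prems(1)])
    show "differentiable_upto k U (\<lambda>y. pd i f y + pd i h y)" using Suc by simp
    show "pd i f y + pd i h y = pd i (\<lambda>y. f y + h y) y" if "y \<in> U" for y
      using pd_add[OF differentiable_upto_imp_differentiable[OF Suc.prems(2,1) that]
          differentiable_upto_imp_differentiable[OF Suc.prems(3,1) that]] by simp
  qed
  with Suc.prems show ?case by (simp add: differentiable_on_eq_differentiable_at)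
qed

lemma differentiable_upto_mult:
  "open U \<Longrightarrow> differentiable_upto k U f \<Longrightarrow> differentiable_upto k U h \<Longrightarrow>
     differentiable_upto k U (\<lambda>y. f y * h y)"
proof (induction k arbitrary: f h)
  case 0
  then show ?case by (simp add: differentiable_on_eq_differentiable_at)
next
  case (Suc k)
  have "differentiable_upto k U (pd i (\<lambda>y. f y * h y))" for i
  proof (rule differentiable_upto_cong[OF Suc.prems(1)])
    have "differentiable_upto k U f" "differentiable_upto k U h"
      using Suc.prems differentiable_upto_Suc_imp by blast+
    then show "differentiable_upto k U (\<lambda>y. f y * pd i h y + pd i f y * h y)"
      using Suc by (simp add: differentiable_upto_add)
    show "f y * pd i h y + pd i f y * h y = pd i (\<lambda>y. f y * h y) y" if "y \<in> U" for y
      using pd_mult[OF differentiable_upto_imp_differentiable[OF Suc.prems(2,1) that]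
          differentiable_upto_imp_differentiable[OF Suc.prems(3,1) that]] by simp
  qed
  with Suc.prems show ?case by (simp add: differentiable_on_eq_differentiable_at)
qed

lemma differentiable_upto_sum:
  assumes "open U" "finite S" "\<And>c. c \<in> S \<Longrightarrow> differentiable_upto k U (F c)"
  shows "differentiable_upto k U (\<lambda>y. \<Sum>c\<in>S. F c y)"
  using assms(2,3)
  by (induction S rule: finite_induct) (auto intro: differentiable_upto_add[OF assms(1)]
      simp: differentiable_upto_const[of k U 0, simplified])

section \<open>Symmetry of mixed partial derivatives\<close>

definition mixed_difference :: "(real^'n::finite \<Rightarrow> real) \<Rightarrow> 'n \<Rightarrow> 'n \<Rightarrow> real^'n \<Rightarrow> real \<Rightarrow> real" where
  "mixed_difference f i j x h = f (x + h *\<^sub>R axis i 1 + h *\<^sub>R axis j 1) - f (x + h *\<^sub>R axis i 1)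
     - f (x + h *\<^sub>R axis j 1) + f x"

lemma mixed_difference_commute: "mixed_difference f i j x h = mixed_difference f j i x h"
  unfolding mixed_difference_def by (simp add: algebra_simps)

lemma mixed_difference_mean_value:
  fixes f :: "real^'n::finite \<Rightarrow> real"
  assumes U: "open U" and f: "f differentiable_on U" and fi: "pd i f differentiable_on U"
    and h: "0 < h"
    and inU: "\<And>s t. 0 \<le> s \<Longrightarrow> s \<le> h \<Longrightarrow> 0 \<le> t \<Longrightarrow> t \<le> h \<Longrightarrow>
        x + s *\<^sub>R axis i 1 + t *\<^sub>R axis j 1 \<in> U"
  obtains s t where "0 < s" "s < h" "0 < t" "t < h"
    "mixed_difference f i j x h = h * h * pd j (pd i f) (x + s *\<^sub>R axis i 1 + t *\<^sub>R axis j 1)"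
proof -
  let ?a = "axis i (1::real)" and ?b = "axis j (1::real)"
  have fd: "f differentiable (at y)" and fid: "pd i f differentiable (at y)" if "y \<in> U" for y
    using f fi U that differentiable_on_eq_differentiable_at by blast+
  define \<phi> where "\<phi> t = f (x + h *\<^sub>R ?b + t *\<^sub>R ?a) - f (x + t *\<^sub>R ?a)" for t
  define \<phi>' where "\<phi>' t = pd i f (x + h *\<^sub>R ?b + t *\<^sub>R ?a) - pd i f (x + t *\<^sub>R ?a)" for t
  have "DERIV \<phi> t :> \<phi>' t" if "0 \<le> t" "t \<le> h" for t
  proof -
    have "x + h *\<^sub>R ?b + t *\<^sub>R ?a \<in> U" "x + t *\<^sub>R ?a \<in> U"
      using inU[of t h] inU[of t 0] that h by (simp_all add: algebra_simps)
    then show ?thesis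
      unfolding \<phi>_def \<phi>'_def by (intro DERIV_diff has_real_derivative_along_axis fd)
  qed
  then obtain s where s: "0 < s" "s < h" "\<phi> h - \<phi> 0 = h * \<phi>' s"
    using MVT2[OF h, of \<phi> \<phi>'] by auto
  define \<psi> where "\<psi> t = pd i f (x + s *\<^sub>R ?a + t *\<^sub>R ?b)" for t
  define \<psi>' where "\<psi>' t = pd j (pd i f) (x + s *\<^sub>R ?a + t *\<^sub>R ?b)" for t
  have "DERIV \<psi> t :> \<psi>' t" if "0 \<le> t" "t \<le> h" for t
  proof -
    have "x + s *\<^sub>R ?a + t *\<^sub>R ?b \<in> U" using inU[of s t] that s by simp
    then show ?thesis unfolding \<psi>_def \<psi>'_def by (intro has_real_derivative_along_axis fid)
  qed
  then obtain t where t: "0 < t" "t < h" "\<psi> h - \<psi> 0 = h * \<psi>' t"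
    using MVT2[OF h, of \<psi> \<psi>'] by auto
  have "\<phi> h - \<phi> 0 = mixed_difference f i j x h"
    unfolding \<phi>_def mixed_difference_def by (simp add: add_ac)
  moreover have "\<phi>' s = \<psi> h - \<psi> 0"
    unfolding \<phi>'_def \<psi>_def by (simp add: add_ac)
  ultimately show ?thesis using that s t unfolding \<psi>'_def by simp
qed

lemma mixed_difference_quotient_tendsto:
  fixes f :: "real^'n::finite \<Rightarrow> real"
  assumes U: "open U" and x: "x \<in> U" and f: "f differentiable_on U"
    and fi: "pd i f differentiable_on U" and cont: "continuous (at x) (pd j (pd i f))"
  shows "((\<lambda>h. mixed_difference f i j x h / (h * h)) \<longlongrightarrow> pd j (pd i f) x) (at_right 0)"
proof (rule tendstoI)
  fix \<epsilon> :: real assume "\<epsilon> > 0"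
  then obtain \<delta> where \<delta>: "\<delta> > 0"
    "\<And>y. dist y x < \<delta> \<Longrightarrow> dist (pd j (pd i f) y) (pd j (pd i f) x) < \<epsilon>"
    using cont unfolding continuous_at_eps_delta by blast
  obtain r where r: "r > 0" "ball x r \<subseteq> U" using U x open_contains_ball by blast
  have near: "dist (x + s *\<^sub>R axis i 1 + t *\<^sub>R axis j 1) x < min \<delta> r"
    if "0 \<le> s" "s \<le> h" "0 \<le> t" "t \<le> h" "h < min \<delta> r / 2" for s t h
  proof -
    have "dist (x + s *\<^sub>R axis i 1 + t *\<^sub>R axis j 1) x = norm (s *\<^sub>R axis i (1::real) + t *\<^sub>R axis j 1)"
      by (simp add: dist_norm)
    also have "\<dots> \<le> s + t"
      using norm_triangle_ineq[of "s *\<^sub>R axis i (1::real)" "t *\<^sub>R axis j 1"] that by simp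
    finally show ?thesis using that by linarith
  qed
  have "dist (mixed_difference f i j x h / (h * h)) (pd j (pd i f) x) < \<epsilon>"
    if h: "0 < h" "h < min \<delta> r / 2" for h
  proof -
    have "x + s *\<^sub>R axis i 1 + t *\<^sub>R axis j 1 \<in> U"
      if "0 \<le> s" "s \<le> h" "0 \<le> t" "t \<le> h" for s t
      using near[OF that h(2)] r(2) by (auto simp: dist_commute)
    then obtain s t where st: "0 < s" "s < h" "0 < t" "t < h" and
      "mixed_difference f i j x h = h * h * pd j (pd i f) (x + s *\<^sub>R axis i 1 + t *\<^sub>R axis j 1)"
      using mixed_difference_mean_value[OF U f fi h(1)] by blast
    moreover have "dist (x + s *\<^sub>R axis i 1 + t *\<^sub>R axis j 1) x < \<delta>"
      using near[of s h t] st h by simp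
    ultimately show ?thesis using \<delta>(2) h(1) by simp
  qed
  then show "eventually (\<lambda>h. dist (mixed_difference f i j x h / (h * h)) (pd j (pd i f) x) < \<epsilon>)
      (at_right 0)"
    unfolding eventually_at_right_field using \<delta>(1) r(1) by (intro exI[of _ "min \<delta> r / 2"]) auto
qed

lemma pd_commute:
  fixes f :: "real^'n::finite \<Rightarrow> real"
  assumes "open U" "x \<in> U" "f differentiable_on U"
    and "pd i f differentiable_on U" "pd j f differentiable_on U"
    and "continuous (at x) (pd j (pd i f))" "continuous (at x) (pd i (pd j f))"
  shows "pd i (pd j f) x = pd j (pd i f) x"
proof (rule tendsto_unique[OF trivial_limit_at_right_real])
  show "((\<lambda>h. mixed_difference f i j x h / (h * h)) \<longlongrightarrow> pd j (pd i f) x) (at_right 0)"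
    by (rule mixed_difference_quotient_tendsto[OF assms(1-4,6)])
  show "((\<lambda>h. mixed_difference f i j x h / (h * h)) \<longlongrightarrow> pd i (pd j f) x) (at_right 0)"
    using mixed_difference_quotient_tendsto[OF assms(1-3,5,7)] by (simp add: mixed_difference_commute)
qed

lemma differentiable_upto_pd_commute:
  assumes "differentiable_upto 2 U f" "open U" "x \<in> U"
  shows "pd i (pd j f) x = pd j (pd i f) x"
proof (rule pd_commute[OF assms(2,3)])
  have D: "differentiable_upto 1 U (pd k f)" "pd k (pd k' f) differentiable_on U" for k k'
    using assms(1) by (simp_all add: numeral_2_eq_2)
  then show "pd i f differentiable_on U" "pd j f differentiable_on U"
    using differentiable_upto_imp_differentiable_on by blast+
  show "continuous (at x) (pd j (pd i f))" "continuous (at x) (pd i (pd j f))"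
    using D(2) assms(2,3)
    by (simp_all add: differentiable_on_eq_differentiable_at differentiable_imp_continuous_within)
  show "f differentiable_on U"
    using assms(1) differentiable_upto_imp_differentiable_on by blast
qed

lemma matrix_inv_mult:
  fixes A :: "'a::semiring_1^'n::finite^'n"
  assumes "invertible A"
  shows "A ** matrix_inv A = mat 1" "matrix_inv A ** A = mat 1"
proof -
  have "\<exists>A'. A ** A' = mat 1 \<and> A' ** A = mat 1" using assms unfolding invertible_def by blast
  then have "A ** matrix_inv A = mat 1 \<and> matrix_inv A ** A = mat 1"
    unfolding matrix_inv_def by (rule someI_ex)
  then show "A ** matrix_inv A = mat 1" "matrix_inv A ** A = mat 1" by auto
qed

lemma matrix_inv_unique_left:
  fixes A :: "'a::semiring_1^'n::finite^'n"
  assumes "invertible A" "B ** A = mat 1"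
  shows "matrix_inv A = B"
proof -
  have "matrix_inv A = (B ** A) ** matrix_inv A" using assms(2) by simp
  also have "\<dots> = B" using matrix_inv_mult(1)[OF assms(1)] by (simp flip: matrix_mul_assoc)
  finally show ?thesis .
qed

lemma matrix_inv_cramer:
  fixes A :: "'a::field^'n::finite^'n"
  assumes "invertible A"
  shows "matrix_inv A $ i $ j = det (\<chi> r c. if c = i then (if r = j then 1 else 0) else A $ r $ c) / det A"
proof -
  let ?x = "matrix_inv A *v axis j 1"
  have "A *v ?x = axis j 1"
    by (simp add: matrix_vector_mul_assoc matrix_inv_mult(1)[OF assms])
  moreover have "det A \<noteq> 0" using assms invertible_det_nz by blast
  ultimately have "?x = (\<chi> k. det (\<chi> r c. if c = k then axis j 1 $ r else A $ r $ c) / det A)"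
    using cramer by blast
  moreover have "?x $ i = matrix_inv A $ i $ j"
    by (simp add: matrix_vector_mult_def axis_def if_distrib cong: if_cong)
  moreover have "(\<chi> r c. if c = i then axis j 1 $ r else A $ r $ c)
      = (\<chi> r c. if c = i then (if r = j then 1 else 0) else A $ r $ c)"
    by (intro arg_cong[where f = vec_lambda] ext) (simp add: axis_def)
  ultimately show ?thesis by simp
qed

lemma differentiable_prod:
  fixes f :: "'i \<Rightarrow> 'a::real_normed_vector \<Rightarrow> 'b::real_normed_field"
  assumes "\<And>i. i \<in> I \<Longrightarrow> f i differentiable (at x)"
  shows "(\<lambda>x. \<Prod>i\<in>I. f i x) differentiable (at x)"
proof -
  obtain D where "\<And>i. i \<in> I \<Longrightarrow> (f i has_derivative D i) (at x)"
    using assms unfolding differentiable_def by metis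
  then show ?thesis unfolding differentiable_def using has_derivative_prod by blast
qed

lemma differentiable_det:
  fixes M :: "'m::real_normed_vector \<Rightarrow> real^'n::finite^'n"
  assumes "\<And>a b. (\<lambda>y. M y $ a $ b) differentiable (at x)"
  shows "(\<lambda>y. det (M y)) differentiable (at x)"
  unfolding det_def
  by (intro differentiable_sum ballI differentiable_mult differentiable_const differentiable_prod
      finite_class.finite_UNIV finite_permutations assms)

lemma differentiable_matrix_inv_entry:
  fixes M :: "'m::real_normed_vector \<Rightarrow> real^'n::finite^'n"
  assumes "open V" "x \<in> V" "\<And>y. y \<in> V \<Longrightarrow> invertible (M y)"
    and "\<And>a b. (\<lambda>y. M y $ a $ b) differentiable (at x)"
  shows "(\<lambda>y. matrix_inv (M y) $ i $ j) differentiable (at x)"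
proof -
  define F where
    "F y = det (\<chi> r c. if c = i then (if r = j then 1 else 0) else M y $ r $ c) / det (M y)" for y
  have "F differentiable (at x)"
    unfolding F_def
  proof (intro differentiable_divide differentiable_det)
    show "(\<lambda>y. (\<chi> r c. if c = i then (if r = j then 1 else 0) else M y $ r $ c) $ r $ c)
      differentiable (at x)" for r c
      by (cases "c = i") (auto intro: assms(4))
    show "det (M x) \<noteq> 0" using assms(2,3) invertible_det_nz by blast
  qed (rule assms(4))
  moreover have "F y = matrix_inv (M y) $ i $ j" if "y \<in> V" for y
    unfolding F_def using matrix_inv_cramer[OF assms(3)[OF that]] by simp
  ultimately show ?thesis
    unfolding differentiable_def
    using has_derivative_transform_within_open[OF _ assms(1,2), of F _ UNIV "\<lambda>y. matrix_inv (M y) $ i $ j"]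
    by blast
qed

lemma lorentzian_matrix_symmetric: "lorentzian_matrix G \<Longrightarrow> transpose G = G"
  unfolding lorentzian_matrix_def by blast

lemma lorentzian_matrix_invertible:
  fixes G :: "real^'n::finite^'n"
  assumes "lorentzian_matrix G"
  shows "invertible G"
proof -
  obtain P :: "real^'n^'n" and k where P: "invertible P"
    and D: "transpose P ** G ** P = (\<chi> a b. if a = b then (if a = k then -1 else 1) else 0)"
    using assms unfolding lorentzian_matrix_def by blast
  let ?D = "(\<chi> a b. if a = b then (if a = k then -1 else 1) else 0) :: real^'n^'n"
  have "det ?D = (\<Prod>i\<in>UNIV. ?D $ i $ i)" by (rule det_diagonal) simp
  also have "\<dots> \<noteq> 0" by simp
  finally have "det (transpose P) * det G * det P \<noteq> 0" by (simp flip: D add: det_mul)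
  then show ?thesis by (simp add: invertible_det_nz)
qed

lemma symmetric_matrix_inv:
  fixes G :: "'a::field^'n::finite^'n"
  assumes "invertible G" "transpose G = G"
  shows "transpose (matrix_inv G) = matrix_inv G"
proof (rule sym, rule matrix_inv_unique_left[OF assms(1)])
  show "transpose (matrix_inv G) ** G = mat 1"
    using arg_cong[OF matrix_inv_mult(1)[OF assms(1)], of transpose] assms(2)
    by (simp add: matrix_transpose_mul)
qed

section \<open>Null frames\<close>

lemma ip_add_right: "ip g y u (v + w) = ip g y u v + ip g y u w"
  unfolding ip_def by (simp add: distrib_left sum.distrib)

lemma ip_scale_right: "ip g y u (c *\<^sub>R v) = c * ip g y u v"
  unfolding ip_def by (simp add: sum_distrib_left mult_ac)

lemma ip_diff_right: "ip g y u (v - w) = ip g y u v - ip g y u w"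
  unfolding ip_def by (simp add: right_diff_distrib sum_subtractf)

lemma ip_zero_right: "ip g y u 0 = 0"
  unfolding ip_def by simp

lemma ip_sum_right: "ip g y u (\<Sum>k\<in>S. f k) = (\<Sum>k\<in>S. ip g y u (f k))"
  by (induction S rule: infinite_finite_induct) (simp_all add: ip_zero_right ip_add_right)

lemma ip_commute:
  assumes "\<And>a b. g y $ a $ b = g y $ b $ a"
  shows "ip g y u v = ip g y v u"
  unfolding ip_def by (subst sum.swap) (simp add: assms mult_ac)

lemma ip_axis_right: "ip g y u (axis e 1) = (\<Sum>b\<in>UNIV. g y $ b $ e * u $ b)"
  unfolding ip_def axis_def by (simp add: if_distrib cong: if_cong)

lemma dual_family_coeff:
  assumes "finite T" "t \<in> T" "\<And>v. v \<in> T \<Longrightarrow> ip g y w v = (if v = t then 1 else 0)"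
  shows "ip g y w (\<Sum>v\<in>T. c v *\<^sub>R v) = c t"
proof -
  have "ip g y w (\<Sum>v\<in>T. c v *\<^sub>R v) = (\<Sum>v\<in>T. if v = t then c v else 0)"
    unfolding ip_sum_right ip_scale_right by (rule sum.cong) (simp_all add: assms(3))
  then show ?thesis using assms(1,2) by simp
qed

context
  fixes g :: "real^'n::finite \<Rightarrow> real^'n^'n" and y :: "real^'n"
    and T :: "(real^'n) set" and d :: "real^'n \<Rightarrow> real^'n"
  assumes finite: "finite T"
    and dual: "\<And>t v. t \<in> T \<Longrightarrow> v \<in> T \<Longrightarrow> ip g y (d t) v = (if v = t then 1 else 0)"
begin

lemma dual_family_independent: "independent T"
proof (rule independent_if_scalars_zero[OF finite])
  fix c t assume "(\<Sum>v\<in>T. c v *\<^sub>R v) = 0" "t \<in> T"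
  then show "c t = 0" using dual_family_coeff[OF finite, of t g y "d t" c] dual ip_zero_right by metis
qed

lemma dual_family_coordinates:
  assumes "u \<in> span T"
  shows "u = (\<Sum>t\<in>T. ip g y (d t) u *\<^sub>R t)"
proof -
  obtain c where c: "u = (\<Sum>v\<in>T. c v *\<^sub>R v)" using assms span_finite[OF finite] by blast
  have "ip g y (d t) u = c t" if "t \<in> T" for t
    unfolding c using dual_family_coeff[OF finite that] dual[OF that] by blast
  then show ?thesis by (subst c) (rule sum.cong, simp_all)
qed

end

lemma null_frame_expansion:
  fixes g :: "real^'n::finite \<Rightarrow> real^'n^'n"
  assumes sym: "\<And>a b. g y $ a $ b = g y $ b $ a" and frame: "null_frame g y l n m"
  shows "u = ip g y n u *\<^sub>R l + ip g y l u *\<^sub>R n + (\<Sum>i\<in>{2..CARD('n)-1}. ip g y (m i) u *\<^sub>R m i)"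
proof -
  let ?I = "{2..CARD('n)-1}" and ?ip = "ip g y"
  define T where "T = insert l (insert n (m ` ?I))"
  \<comment> \<open>\<open>d t\<close> is the member of the frame dual to \<open>t\<close>, so the frame is a basis.\<close>
  define d where "d v = (if v = l then n else if v = n then l else v)" for v
  have ip_sym: "?ip v w = ?ip w v" for v w using ip_commute[of g y, OF sym] .
  have ll: "?ip l l = 0" and nn: "?ip n n = 0" and ln: "?ip l n = 1" "?ip n l = 1"
    and lm: "\<And>i. i \<in> ?I \<Longrightarrow> ?ip l (m i) = 0 \<and> ?ip (m i) l = 0"
    and nm: "\<And>i. i \<in> ?I \<Longrightarrow> ?ip n (m i) = 0 \<and> ?ip (m i) n = 0"
    and mm: "\<And>i j. i \<in> ?I \<Longrightarrow> j \<in> ?I \<Longrightarrow> ?ip (m i) (m j) = (if i = j then 1 else 0)"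
    using frame ip_sym unfolding null_frame_def by auto
  have l_notin: "l \<notin> insert n (m ` ?I)" using ll ln nm by auto
  have n_notin: "n \<notin> m ` ?I" using ln lm by auto
  have inj: "inj_on m ?I" by (rule inj_onI) (metis mm zero_neq_one)
  have dm: "d (m i) = m i" if "i \<in> ?I" for i using that l_notin n_notin unfolding d_def by auto
  have dual: "?ip (d t) v = (if v = t then 1 else 0)" if "t \<in> T" "v \<in> T" for t v
    using that l_notin n_notin ll nn ln lm nm mm inj_onD[OF inj]
    unfolding T_def d_def by (auto simp: ip_sym)
  have fin: "finite T" unfolding T_def by simp
  have "dim (UNIV :: (real^'n) set) \<le> card T"
    using l_notin n_notin card_image[OF inj] unfolding T_def by simp
  then have "UNIV \<subseteq> span T"
    using card_ge_dim_independent[OF subset_UNIV dual_family_independent[OF fin dual]] by blast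
  then have "u = (\<Sum>t\<in>T. ?ip (d t) u *\<^sub>R t)"
    using dual_family_coordinates[OF fin dual] by blast
  also have "\<dots> = ?ip n u *\<^sub>R l + ?ip l u *\<^sub>R n + (\<Sum>t\<in>m ` ?I. ?ip (d t) u *\<^sub>R t)"
    using l_notin n_notin unfolding T_def by (simp add: d_def add.assoc)
  also have "(\<Sum>t\<in>m ` ?I. ?ip (d t) u *\<^sub>R t) = (\<Sum>i\<in>?I. ?ip (m i) u *\<^sub>R m i)"
    unfolding sum.reindex[OF inj] by (rule sum.cong) (simp_all add: dm)
  finally show ?thesis .
qed

lemma matrix_inv_null_frame:
  fixes g :: "real^'n::finite \<Rightarrow> real^'n^'n"
  assumes sym: "\<And>a b. g y $ a $ b = g y $ b $ a" and inv: "invertible (g y)"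
    and frame: "null_frame g y l n m"
  shows "matrix_inv (g y) $ a $ b = l $ a * n $ b + n $ a * l $ b
     + (\<Sum>i\<in>{2..CARD('n)-1}. m i $ a * m i $ b)"
proof -
  let ?I = "{2..CARD('n)-1}"
  define K :: "real^'n^'n" where
    "K = (\<chi> a b. l $ a * n $ b + n $ a * l $ b + (\<Sum>i\<in>?I. m i $ a * m i $ b))"
  have "(K ** g y) $ a $ e = axis e 1 $ a" for a e
  proof -
    have "(K ** g y) $ a $ e = l $ a * ip g y n (axis e 1) + n $ a * ip g y l (axis e 1)
        + (\<Sum>i\<in>?I. m i $ a * ip g y (m i) (axis e 1))"
      unfolding K_def matrix_matrix_mult_def ip_axis_right
      by (simp add: algebra_simps sum.distrib sum_distrib_left sum_distrib_right) (rule sum.swap)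
    also have "\<dots> = axis e 1 $ a"
      using arg_cong[OF null_frame_expansion[OF sym frame, of "axis e 1"], of "\<lambda>v. v $ a"]
      by (simp add: mult_ac)
    finally show ?thesis .
  qed
  then have "K ** g y = mat 1" by (simp add: vec_eq_iff mat_def axis_def)
  then show ?thesis using matrix_inv_unique_left[OF inv] K_def by simp
qed

section \<open>Index computations\<close>

text \<open>The identities below are stated for arbitrary arrays, so that no partial derivative is
  visible to the simplifier: \<open>G\<close>, \<open>H\<close> stand for the metric and its inverse at a point,
  \<open>dG\<close>, \<open>ddG\<close> for their first and second partial derivatives, \<open>Ga\<close>, \<open>Gl\<close> for the
  Christoffel symbols of the second and first kind, \<open>dGa\<close> for \<open>\<partial>\<^sub>c \<Gamma>\<^sup>e\<^sub>d\<^sub>b\<close>, \<open>lo\<close>, \<open>dlo\<close>, \<open>ddlo\<close>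
  for the lowered null vector and its derivatives, and \<open>L\<close>, \<open>dL\<close> for \<open>\<ell>\<^sub>b\<^sub>;\<^sub>d\<close> and its
  partial derivatives.\<close>

lemma contract_inverse:
  fixes G H :: "'n::finite \<Rightarrow> 'n \<Rightarrow> real"
  assumes GH: "\<And>a b. (\<Sum>c\<in>UNIV. G a c * H c b) = (if a = b then 1 else 0)"
  shows "(\<Sum>e\<in>UNIV. G a e * (\<Sum>f\<in>UNIV. H e f * X f)) = X a"
proof -
  have "(\<Sum>e\<in>UNIV. G a e * (\<Sum>f\<in>UNIV. H e f * X f)) = (\<Sum>e\<in>UNIV. \<Sum>f\<in>UNIV. G a e * H e f * X f)"
    by (simp add: sum_distrib_left mult_ac)
  also have "\<dots> = (\<Sum>f\<in>UNIV. \<Sum>e\<in>UNIV. G a e * H e f * X f)" by (rule sum.swap)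
  also have "\<dots> = (\<Sum>f\<in>UNIV. (if a = f then 1 else 0) * X f)"
    by (simp add: sum_distrib_right[symmetric] GH)
  also have "\<dots> = (\<Sum>f\<in>UNIV. if a = f then X f else 0)" by (intro sum.cong refl) simp
  finally show ?thesis by simp
qed

lemma contract_inverse_pair:
  fixes G H :: "'n::finite \<Rightarrow> 'n \<Rightarrow> real"
  assumes Gs: "\<And>a b. G a b = G b a"
    and GH: "\<And>a b. (\<Sum>c\<in>UNIV. G a c * H c b) = (if a = b then 1 else 0)"
  shows "(\<Sum>c\<in>UNIV. (\<Sum>d\<in>UNIV. H c d * X d) * (\<Sum>e\<in>UNIV. G c e * Y e)) = (\<Sum>d\<in>UNIV. X d * Y d)"
proof -
  have "(\<Sum>c\<in>UNIV. (\<Sum>d\<in>UNIV. H c d * X d) * (\<Sum>e\<in>UNIV. G c e * Y e))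
      = (\<Sum>c\<in>UNIV. \<Sum>e\<in>UNIV. Y e * (G e c * (\<Sum>d\<in>UNIV. H c d * X d)))"
    by (simp add: sum_distrib_left sum_distrib_right Gs mult_ac)
  also have "\<dots> = (\<Sum>e\<in>UNIV. Y e * (\<Sum>c\<in>UNIV. G e c * (\<Sum>d\<in>UNIV. H c d * X d)))"
    by (subst sum.swap) (simp add: sum_distrib_left)
  finally show ?thesis unfolding contract_inverse[OF GH] by (simp add: mult.commute)
qed

lemma split_contract_left:
  fixes lo A B X :: "'n::finite \<Rightarrow> real"
  assumes "\<And>b d. L b d = lo b * A d + B b * lo d" "(\<Sum>b\<in>UNIV. lo b * X b) = 0"
  shows "(\<Sum>b\<in>UNIV. X b * L b c) = (\<Sum>b\<in>UNIV. B b * X b) * lo c"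
proof -
  have "(\<Sum>b\<in>UNIV. X b * L b c) = (\<Sum>b\<in>UNIV. lo b * X b) * A c + (\<Sum>b\<in>UNIV. B b * X b) * lo c"
    unfolding assms(1) by (simp add: algebra_simps sum.distrib sum_distrib_left sum_distrib_right)
  then show ?thesis using assms(2) by simp
qed

lemma split_contract_right:
  fixes lo A B X :: "'n::finite \<Rightarrow> real"
  assumes "\<And>b d. L b d = lo b * A d + B b * lo d" "(\<Sum>b\<in>UNIV. lo b * X b) = 0"
  shows "(\<Sum>d\<in>UNIV. L c d * X d) = lo c * (\<Sum>d\<in>UNIV. A d * X d)"
proof -
  have "(\<Sum>d\<in>UNIV. L c d * X d) = lo c * (\<Sum>d\<in>UNIV. A d * X d) + B c * (\<Sum>d\<in>UNIV. lo d * X d)"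
    unfolding assms(1) by (simp add: algebra_simps sum.distrib sum_distrib_left)
  then show ?thesis using assms(2) by simp
qed

lemma christoffel_first_index_split_contract:
  fixes lo A B P S :: "'n::finite \<Rightarrow> real" and L :: "'n \<Rightarrow> 'n \<Rightarrow> real"
    and Ga :: "'n \<Rightarrow> 'n \<Rightarrow> 'n \<Rightarrow> real"
  assumes L: "\<And>b d. L b d = lo b * A d + B b * lo d" and S: "(\<Sum>b\<in>UNIV. lo b * S b) = 0"
  shows "(\<Sum>b\<in>UNIV. \<Sum>d\<in>UNIV. (\<Sum>e\<in>UNIV. Ga e c b * L e d) * P b * S d)
      = (\<Sum>d\<in>UNIV. A d * S d) * (\<Sum>b\<in>UNIV. \<Sum>e\<in>UNIV. Ga e c b * P b * lo e)"
proof -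
  have "(\<Sum>b\<in>UNIV. \<Sum>d\<in>UNIV. (\<Sum>e\<in>UNIV. Ga e c b * L e d) * P b * S d)
     = (\<Sum>b\<in>UNIV. \<Sum>d\<in>UNIV. \<Sum>e\<in>UNIV. Ga e c b * P b * (L e d * S d))"
    by (simp add: sum_distrib_right sum_distrib_left mult_ac)
  also have "\<dots> = (\<Sum>b\<in>UNIV. \<Sum>e\<in>UNIV. \<Sum>d\<in>UNIV. Ga e c b * P b * (L e d * S d))"
    by (rule sum.cong[OF refl], rule sum.swap)
  also have "\<dots> = (\<Sum>b\<in>UNIV. \<Sum>e\<in>UNIV. Ga e c b * P b * (\<Sum>d\<in>UNIV. L e d * S d))"
    by (simp add: sum_distrib_left)
  finally show ?thesis
    unfolding split_contract_right[OF L S] by (simp add: sum_distrib_left mult_ac)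
qed

lemma christoffel_second_index_split_contract:
  fixes lo A B P S :: "'n::finite \<Rightarrow> real" and L :: "'n \<Rightarrow> 'n \<Rightarrow> real"
    and Ga :: "'n \<Rightarrow> 'n \<Rightarrow> 'n \<Rightarrow> real"
  assumes L: "\<And>b d. L b d = lo b * A d + B b * lo d" and P: "(\<Sum>b\<in>UNIV. lo b * P b) = 0"
  shows "(\<Sum>b\<in>UNIV. \<Sum>d\<in>UNIV. (\<Sum>e\<in>UNIV. Ga e c d * L b e) * P b * S d)
      = (\<Sum>b\<in>UNIV. B b * P b) * (\<Sum>d\<in>UNIV. \<Sum>e\<in>UNIV. Ga e c d * S d * lo e)"
proof -
  have "(\<Sum>b\<in>UNIV. \<Sum>d\<in>UNIV. (\<Sum>e\<in>UNIV. Ga e c d * L b e) * P b * S d)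
     = (\<Sum>d\<in>UNIV. \<Sum>b\<in>UNIV. \<Sum>e\<in>UNIV. Ga e c d * S d * (P b * L b e))"
    by (subst sum.swap) (simp add: sum_distrib_right sum_distrib_left mult_ac)
  also have "\<dots> = (\<Sum>d\<in>UNIV. \<Sum>e\<in>UNIV. \<Sum>b\<in>UNIV. Ga e c d * S d * (P b * L b e))"
    by (rule sum.cong[OF refl], rule sum.swap)
  also have "\<dots> = (\<Sum>d\<in>UNIV. \<Sum>e\<in>UNIV. Ga e c d * S d * (\<Sum>b\<in>UNIV. P b * L b e))"
    by (simp add: sum_distrib_left)
  finally show ?thesis
    unfolding split_contract_left[OF L P] by (simp add: sum_distrib_left mult_ac)
qed

lemma cov_deriv_split_contract:
  fixes lo A B P S :: "'n::finite \<Rightarrow> real" and dlo dA dB L :: "'n \<Rightarrow> 'n \<Rightarrow> real"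
    and Ga dL :: "'n \<Rightarrow> 'n \<Rightarrow> 'n \<Rightarrow> real"
  assumes L: "\<And>b d. L b d = lo b * A d + B b * lo d"
    and dL: "\<And>c b d. dL c b d = lo b * dA c d + dlo c b * A d + B b * dlo c d + dB c b * lo d"
    and Gs: "\<And>e b c. Ga e c b = Ga e b c"
    and Ld: "\<And>b c. L b c = dlo c b - (\<Sum>e\<in>UNIV. Ga e b c * lo e)"
    and P: "(\<Sum>b\<in>UNIV. lo b * P b) = 0" and S: "(\<Sum>b\<in>UNIV. lo b * S b) = 0"
  shows "(\<Sum>b\<in>UNIV. \<Sum>d\<in>UNIV. (dL c b d - (\<Sum>e\<in>UNIV. Ga e c b * L e d)
            - (\<Sum>e\<in>UNIV. Ga e c d * L b e)) * P b * S d)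
      = (\<Sum>d\<in>UNIV. A d * S d) * (\<Sum>b\<in>UNIV. P b * L b c)
        + (\<Sum>b\<in>UNIV. B b * P b) * (\<Sum>d\<in>UNIV. S d * L d c)"
proof -
  define AS where "AS = (\<Sum>d\<in>UNIV. A d * S d)"
  define BP where "BP = (\<Sum>b\<in>UNIV. B b * P b)"
  have "(\<Sum>b\<in>UNIV. \<Sum>d\<in>UNIV. dL c b d * P b * S d)
    = (\<Sum>b\<in>UNIV. lo b * P b) * (\<Sum>d\<in>UNIV. dA c d * S d) + (\<Sum>b\<in>UNIV. dlo c b * P b) * AS
      + BP * (\<Sum>d\<in>UNIV. dlo c d * S d) + (\<Sum>b\<in>UNIV. dB c b * P b) * (\<Sum>d\<in>UNIV. lo d * S d)"
    unfolding AS_def BP_def dL sum_product by (simp add: sum.distrib algebra_simps)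
  then have leibniz: "(\<Sum>b\<in>UNIV. \<Sum>d\<in>UNIV. dL c b d * P b * S d)
      = (\<Sum>b\<in>UNIV. dlo c b * P b) * AS + BP * (\<Sum>d\<in>UNIV. dlo c d * S d)"
    using P S by simp
  have "(\<Sum>b\<in>UNIV. \<Sum>d\<in>UNIV. (dL c b d - (\<Sum>e\<in>UNIV. Ga e c b * L e d)
            - (\<Sum>e\<in>UNIV. Ga e c d * L b e)) * P b * S d)
      = AS * (\<Sum>b\<in>UNIV. P b * (dlo c b - (\<Sum>e\<in>UNIV. Ga e c b * lo e)))
        + BP * (\<Sum>d\<in>UNIV. S d * (dlo c d - (\<Sum>e\<in>UNIV. Ga e c d * lo e)))"
    unfolding left_diff_distrib sum_subtractf leibniz AS_def BP_def
      christoffel_first_index_split_contract[OF L S] christoffel_second_index_split_contract[OF L P]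
    by (simp add: algebra_simps sum_subtractf sum_distrib_left sum.distrib)
  also have "\<dots> = AS * (\<Sum>b\<in>UNIV. P b * L b c) + BP * (\<Sum>d\<in>UNIV. S d * L d c)"
    unfolding Ld using Gs by simp
  finally show ?thesis unfolding AS_def BP_def .
qed

lemma cov_deriv_split_null_contract:
  fixes lo A B P Q S :: "'n::finite \<Rightarrow> real" and dlo dA dB L :: "'n \<Rightarrow> 'n \<Rightarrow> real"
    and Ga dL :: "'n \<Rightarrow> 'n \<Rightarrow> 'n \<Rightarrow> real"
  assumes L: "\<And>b d. L b d = lo b * A d + B b * lo d"
    and dL: "\<And>c b d. dL c b d = lo b * dA c d + dlo c b * A d + B b * dlo c d + dB c b * lo d"
    and Gs: "\<And>e b c. Ga e c b = Ga e b c"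
    and Ld: "\<And>b c. L b c = dlo c b - (\<Sum>e\<in>UNIV. Ga e b c * lo e)"
    and P: "(\<Sum>b\<in>UNIV. lo b * P b) = 0" and Q: "(\<Sum>b\<in>UNIV. lo b * Q b) = 0"
    and S: "(\<Sum>b\<in>UNIV. lo b * S b) = 0"
  shows "(\<Sum>c\<in>UNIV. \<Sum>b\<in>UNIV. \<Sum>d\<in>UNIV. (dL c b d - (\<Sum>e\<in>UNIV. Ga e c b * L e d)
            - (\<Sum>e\<in>UNIV. Ga e c d * L b e)) * P b * Q c * S d) = 0"
proof -
  have null: "(\<Sum>c\<in>UNIV. Q c * (\<Sum>b\<in>UNIV. X b * L b c)) = 0"
    if "(\<Sum>b\<in>UNIV. lo b * X b) = 0" for X
  proof -
    have "(\<Sum>c\<in>UNIV. Q c * (\<Sum>b\<in>UNIV. X b * L b c))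
        = (\<Sum>b\<in>UNIV. B b * X b) * (\<Sum>c\<in>UNIV. lo c * Q c)"
      unfolding split_contract_left[OF L that] by (simp add: sum_distrib_left sum_distrib_right mult_ac)
    then show ?thesis using Q by simp
  qed
  have "(\<Sum>c\<in>UNIV. \<Sum>b\<in>UNIV. \<Sum>d\<in>UNIV. (dL c b d - (\<Sum>e\<in>UNIV. Ga e c b * L e d)
            - (\<Sum>e\<in>UNIV. Ga e c d * L b e)) * P b * Q c * S d)
      = (\<Sum>c\<in>UNIV. Q c * (\<Sum>b\<in>UNIV. \<Sum>d\<in>UNIV. (dL c b d - (\<Sum>e\<in>UNIV. Ga e c b * L e d)
            - (\<Sum>e\<in>UNIV. Ga e c d * L b e)) * P b * S d))"
    by (simp add: sum_distrib_left mult_ac)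
  also have "\<dots> = (\<Sum>c\<in>UNIV. Q c * ((\<Sum>d\<in>UNIV. A d * S d) * (\<Sum>b\<in>UNIV. P b * L b c)
        + (\<Sum>b\<in>UNIV. B b * P b) * (\<Sum>d\<in>UNIV. S d * L d c)))"
    using cov_deriv_split_contract[OF L dL Gs Ld P S] by simp
  also have "\<dots> = (\<Sum>d\<in>UNIV. A d * S d) * (\<Sum>c\<in>UNIV. Q c * (\<Sum>b\<in>UNIV. P b * L b c))
        + (\<Sum>b\<in>UNIV. B b * P b) * (\<Sum>c\<in>UNIV. Q c * (\<Sum>d\<in>UNIV. S d * L d c))"
    by (simp add: algebra_simps sum.distrib sum_distrib_left)
  finally show ?thesis using null[OF P] null[OF S] by simp
qed

lemma christoffel_contract_cov:
  fixes lo :: "'n::finite \<Rightarrow> real" and dlo L :: "'n \<Rightarrow> 'n \<Rightarrow> real" and Ga :: "'n \<Rightarrow> 'n \<Rightarrow> 'n \<Rightarrow> real"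
  assumes Gs: "\<And>e b d. Ga e b d = Ga e d b"
    and L: "\<And>b d. L b d = dlo d b - (\<Sum>e\<in>UNIV. Ga e b d * lo e)"
  shows "(\<Sum>e\<in>UNIV. Ga e x b * L e y)
    = (\<Sum>e\<in>UNIV. Ga e b x * dlo y e) - (\<Sum>f\<in>UNIV. \<Sum>e\<in>UNIV. lo f * Ga f y e * Ga e x b)"
proof -
  have "(\<Sum>e\<in>UNIV. Ga e x b * (\<Sum>f\<in>UNIV. Ga f e y * lo f))
      = (\<Sum>e\<in>UNIV. \<Sum>f\<in>UNIV. lo f * Ga f y e * Ga e x b)"
    by (simp add: sum_distrib_left mult_ac Gs[of _ _ y])
  also have "\<dots> = (\<Sum>f\<in>UNIV. \<Sum>e\<in>UNIV. lo f * Ga f y e * Ga e x b)" by (rule sum.swap)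
  finally show ?thesis
    unfolding L by (simp add: right_diff_distrib sum_subtractf Gs[of _ x b])
qed

lemma ricci_identity_algebraic:
  fixes lo :: "'n::finite \<Rightarrow> real" and dlo L :: "'n \<Rightarrow> 'n \<Rightarrow> real"
    and ddlo Ga dL :: "'n \<Rightarrow> 'n \<Rightarrow> 'n \<Rightarrow> real" and dGa :: "'n \<Rightarrow> 'n \<Rightarrow> 'n \<Rightarrow> 'n \<Rightarrow> real"
  assumes dds: "ddlo c d b = ddlo d c b"
    and Gs: "\<And>e b d. Ga e b d = Ga e d b" and dGs: "\<And>c e b d. dGa c e b d = dGa c e d b"
    and L: "\<And>b d. L b d = dlo d b - (\<Sum>e\<in>UNIV. Ga e b d * lo e)"
    and dL: "\<And>c b d. dL c b d = ddlo c d b - (\<Sum>e\<in>UNIV. dGa c e b d * lo e + Ga e b d * dlo c e)"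
  shows "(\<Sum>f\<in>UNIV. lo f * (dGa c f d b - dGa d f c b
            + (\<Sum>e\<in>UNIV. Ga f c e * Ga e d b - Ga f d e * Ga e c b)))
     = (dL d b c - (\<Sum>e\<in>UNIV. Ga e d b * L e c) - (\<Sum>e\<in>UNIV. Ga e d c * L b e))
       - (dL c b d - (\<Sum>e\<in>UNIV. Ga e c b * L e d) - (\<Sum>e\<in>UNIV. Ga e c d * L b e))"
proof -
  define Qcd where "Qcd = (\<Sum>f\<in>UNIV. \<Sum>e\<in>UNIV. lo f * Ga f c e * Ga e d b)"
  define Qdc where "Qdc = (\<Sum>f\<in>UNIV. \<Sum>e\<in>UNIV. lo f * Ga f d e * Ga e c b)"
  have "(\<Sum>f\<in>UNIV. lo f * (dGa c f d b - dGa d f c b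
            + (\<Sum>e\<in>UNIV. Ga f c e * Ga e d b - Ga f d e * Ga e c b)))
      = (\<Sum>f\<in>UNIV. lo f * dGa c f d b) - (\<Sum>f\<in>UNIV. lo f * dGa d f c b) + Qcd - Qdc"
    unfolding Qcd_def Qdc_def
    by (simp add: algebra_simps sum.distrib sum_subtractf sum_distrib_left)
  moreover have "dL c b d = ddlo c d b - ((\<Sum>e\<in>UNIV. lo e * dGa c e d b) + (\<Sum>e\<in>UNIV. Ga e b d * dlo c e))"
    "dL d b c = ddlo d c b - ((\<Sum>e\<in>UNIV. lo e * dGa d e c b) + (\<Sum>e\<in>UNIV. Ga e b c * dlo d e))"
    unfolding dL by (simp_all add: sum.distrib mult_ac dGs)
  moreover have "(\<Sum>e\<in>UNIV. Ga e c b * L e d) = (\<Sum>e\<in>UNIV. Ga e b c * dlo d e) - Qdc"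
    "(\<Sum>e\<in>UNIV. Ga e d b * L e c) = (\<Sum>e\<in>UNIV. Ga e b d * dlo c e) - Qcd"
    unfolding Qcd_def Qdc_def by (rule christoffel_contract_cov[OF Gs L])+
  moreover have "(\<Sum>e\<in>UNIV. Ga e c d * L b e) = (\<Sum>e\<in>UNIV. Ga e d c * L b e)" using Gs by simp
  ultimately show ?thesis using dds by simp
qed

text \<open>The classical formula \<open>R\<^sub>a\<^sub>b\<^sub>c\<^sub>d = \<onehalf>(g\<^sub>a\<^sub>b\<^sub>,\<^sub>d\<^sub>c + g\<^sub>a\<^sub>d\<^sub>,\<^sub>b\<^sub>c - g\<^sub>d\<^sub>b\<^sub>,\<^sub>a\<^sub>c) - (c \<leftrightarrow> d)
  - \<Gamma>\<^sub>e\<^sub>c\<^sub>a \<Gamma>\<^sup>e\<^sub>d\<^sub>b + \<Gamma>\<^sub>e\<^sub>d\<^sub>a \<Gamma>\<^sup>e\<^sub>c\<^sub>b\<close>, from which the antisymmetry in \<open>a, b\<close> is read off.\<close>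

lemma riemann_lowered_expansion:
  fixes G H :: "'n::finite \<Rightarrow> 'n \<Rightarrow> real" and dG Ga Gl :: "'n \<Rightarrow> 'n \<Rightarrow> 'n \<Rightarrow> real"
    and ddG dGa :: "'n \<Rightarrow> 'n \<Rightarrow> 'n \<Rightarrow> 'n \<Rightarrow> real"
  assumes GH: "\<And>a b. (\<Sum>c\<in>UNIV. G a c * H c b) = (if a = b then 1 else 0)"
    and dGs: "\<And>k a b. dG k a b = dG k b a"
    and Gl: "\<And>f d b. Gl f d b = (1/2) * (dG d f b + dG b f d - dG f d b)"
    and Ga: "\<And>e d b. Ga e d b = (\<Sum>f\<in>UNIV. H e f * Gl f d b)"
    and dGa: "\<And>c a d b. (\<Sum>e\<in>UNIV. G a e * dGa c e d b)
         = (1/2) * (ddG c d a b + ddG c b a d - ddG c a d b) - (\<Sum>e\<in>UNIV. dG c a e * Ga e d b)"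
  shows "(\<Sum>e\<in>UNIV. G a e * (dGa c e d b - dGa d e c b
            + (\<Sum>f\<in>UNIV. Ga e c f * Ga f d b - Ga e d f * Ga f c b)))
     = (1/2) * (ddG c d a b + ddG c b a d - ddG c a d b) - (1/2) * (ddG d c a b + ddG d b a c - ddG d a c b)
       - (\<Sum>e\<in>UNIV. Gl e c a * Ga e d b) + (\<Sum>e\<in>UNIV. Gl e d a * Ga e c b)"
proof -
  have dG_split: "dG c a e = Gl a c e + Gl e c a" for c a e
    unfolding Gl using dGs by (simp add: algebra_simps)
  have quadratic: "(\<Sum>e\<in>UNIV. G a e * (\<Sum>f\<in>UNIV. Ga e c f * Ga f d b))
      - (\<Sum>e\<in>UNIV. dG c a e * Ga e d b) = - (\<Sum>e\<in>UNIV. Gl e c a * Ga e d b)" for c d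
  proof -
    have "(\<Sum>e\<in>UNIV. G a e * (\<Sum>f\<in>UNIV. Ga e c f * Ga f d b))
        = (\<Sum>e\<in>UNIV. \<Sum>f\<in>UNIV. G a e * Ga e c f * Ga f d b)"
      by (simp add: sum_distrib_left mult_ac)
    also have "\<dots> = (\<Sum>f\<in>UNIV. \<Sum>e\<in>UNIV. G a e * Ga e c f * Ga f d b)" by (rule sum.swap)
    also have "\<dots> = (\<Sum>f\<in>UNIV. (\<Sum>e\<in>UNIV. G a e * Ga e c f) * Ga f d b)"
      by (simp add: sum_distrib_right)
    also have "\<dots> = (\<Sum>f\<in>UNIV. Gl a c f * Ga f d b)"
      unfolding Ga contract_inverse[OF GH] ..
    finally show ?thesis
      unfolding dG_split by (simp add: algebra_simps sum.distrib)
  qed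
  have "(\<Sum>e\<in>UNIV. G a e * (dGa c e d b - dGa d e c b
            + (\<Sum>f\<in>UNIV. Ga e c f * Ga f d b - Ga e d f * Ga f c b)))
      = (\<Sum>e\<in>UNIV. G a e * dGa c e d b) - (\<Sum>e\<in>UNIV. G a e * dGa d e c b)
        + (\<Sum>e\<in>UNIV. G a e * (\<Sum>f\<in>UNIV. Ga e c f * Ga f d b))
        - (\<Sum>e\<in>UNIV. G a e * (\<Sum>f\<in>UNIV. Ga e d f * Ga f c b))"
    by (simp add: algebra_simps sum.distrib sum_subtractf)
  then show ?thesis unfolding dGa using quadratic[of c d] quadratic[of d c] by simp
qed

lemma riemann_lowered_antisym_algebraic:
  fixes G H :: "'n::finite \<Rightarrow> 'n \<Rightarrow> real" and dG Ga Gl :: "'n \<Rightarrow> 'n \<Rightarrow> 'n \<Rightarrow> real"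
    and ddG dGa :: "'n \<Rightarrow> 'n \<Rightarrow> 'n \<Rightarrow> 'n \<Rightarrow> real"
  assumes Hs: "\<And>a b. H a b = H b a"
    and GH: "\<And>a b. (\<Sum>c\<in>UNIV. G a c * H c b) = (if a = b then 1 else 0)"
    and dGs: "\<And>k a b. dG k a b = dG k b a"
    and ddGs1: "\<And>c d a b. ddG c d a b = ddG d c a b"
    and ddGs2: "\<And>c d a b. ddG c d a b = ddG c d b a"
    and Gl: "\<And>f d b. Gl f d b = (1/2) * (dG d f b + dG b f d - dG f d b)"
    and Ga: "\<And>e d b. Ga e d b = (\<Sum>f\<in>UNIV. H e f * Gl f d b)"
    and dGa: "\<And>c a d b. (\<Sum>e\<in>UNIV. G a e * dGa c e d b)
         = (1/2) * (ddG c d a b + ddG c b a d - ddG c a d b) - (\<Sum>e\<in>UNIV. dG c a e * Ga e d b)"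
  shows "(\<Sum>e\<in>UNIV. G a e * (dGa c e d b - dGa d e c b
            + (\<Sum>f\<in>UNIV. Ga e c f * Ga f d b - Ga e d f * Ga f c b)))
    = - (\<Sum>e\<in>UNIV. G b e * (dGa c e d a - dGa d e c a
            + (\<Sum>f\<in>UNIV. Ga e c f * Ga f d a - Ga e d f * Ga f c a)))"
proof -
  have quadratic_sym: "(\<Sum>e\<in>UNIV. Gl e c a * Ga e d b) = (\<Sum>e\<in>UNIV. Gl e d b * Ga e c a)"
    for c a d b
  proof -
    have "(\<Sum>e\<in>UNIV. Gl e c a * Ga e d b) = (\<Sum>e\<in>UNIV. \<Sum>f\<in>UNIV. Gl e c a * H e f * Gl f d b)"
      unfolding Ga by (simp add: sum_distrib_left mult_ac)
    also have "\<dots> = (\<Sum>f\<in>UNIV. \<Sum>e\<in>UNIV. Gl e c a * H e f * Gl f d b)" by (rule sum.swap)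
    also have "\<dots> = (\<Sum>e\<in>UNIV. Gl e d b * Ga e c a)"
      unfolding Ga by (simp add: sum_distrib_left mult_ac Hs)
    finally show ?thesis .
  qed
  show ?thesis
    unfolding riemann_lowered_expansion[OF GH dGs Gl Ga dGa]
    using ddGs1[of c d a b] ddGs1[of c d b a] ddGs2[of c d a b] ddGs2[of d c a b]
      ddGs2[of c b a d] ddGs2[of c a d b] ddGs2[of d b a c] ddGs2[of d a c b]
      quadratic_sym[of c a d b] quadratic_sym[of d a c b]
    by (simp add: algebra_simps)
qed

lemma contr2_add_left: "contr2 T (u + v) w = contr2 T u w + contr2 T v w"
  unfolding contr2_def by (simp add: algebra_simps sum.distrib)

lemma contr2_scale_left: "contr2 T (c *\<^sub>R u) w = c * contr2 T u w"
  unfolding contr2_def by (simp add: sum_distrib_left mult_ac)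

lemma contr2_diff_left: "contr2 T (u - v) w = contr2 T u w - contr2 T v w"
  unfolding contr2_def by (simp add: algebra_simps sum_subtractf)

lemma contr2_zero_left: "contr2 T 0 w = 0"
  unfolding contr2_def by simp

lemma contr2_sum_left: "contr2 T (\<Sum>k\<in>S. f k) w = (\<Sum>k\<in>S. contr2 T (f k) w)"
  by (induction S rule: infinite_finite_induct) (simp_all add: contr2_zero_left contr2_add_left)

lemma contr2_add_right: "contr2 T w (u + v) = contr2 T w u + contr2 T w v"
  unfolding contr2_def by (simp add: algebra_simps sum.distrib)

lemma contr2_scale_right: "contr2 T w (c *\<^sub>R u) = c * contr2 T w u"
  unfolding contr2_def by (simp add: sum_distrib_left mult_ac)

lemma contr2_diff_right: "contr2 T w (u - v) = contr2 T w u - contr2 T w v"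
  unfolding contr2_def by (simp add: algebra_simps sum_subtractf)

lemma contr2_zero_right: "contr2 T w 0 = 0"
  unfolding contr2_def by simp

lemma contr2_sum_right: "contr2 T w (\<Sum>k\<in>S. f k) = (\<Sum>k\<in>S. contr2 T w (f k))"
  by (induction S rule: infinite_finite_induct) (simp_all add: contr2_zero_right contr2_add_right)

lemmas contr2_linear = contr2_add_left contr2_scale_left contr2_sum_left
  contr2_add_right contr2_scale_right contr2_sum_right

lemma contr2_axis: "contr2 T (axis b 1) (axis d 1) = T b d"
proof -
  have "contr2 T (axis b 1) (axis d 1) = (\<Sum>a\<in>UNIV. \<Sum>c\<in>UNIV. if a = b \<and> c = d then T a c else 0)"
    unfolding contr2_def axis_def by (intro sum.cong refl) auto
  also have "\<dots> = (\<Sum>a\<in>UNIV. if a = b then T a d else 0)"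
    by (intro sum.cong refl) auto
  finally show ?thesis by simp
qed

lemma ip_eq_contr2: "ip g x u v = contr2 (\<lambda>a b. g x $ a $ b) u v"
  unfolding ip_def contr2_def ..

lemma contr4_add:
  "contr4 (\<lambda>a b c d. T a b c d + T' a b c d) u v w z = contr4 T u v w z + contr4 T' u v w z"
  unfolding contr4_def by (simp add: algebra_simps sum.distrib)

lemma contr4_diff:
  "contr4 (\<lambda>a b c d. T a b c d - T' a b c d) u v w z = contr4 T u v w z - contr4 T' u v w z"
  unfolding contr4_def by (simp add: algebra_simps sum_subtractf)

lemma contr4_cmult: "contr4 (\<lambda>a b c d. k * T a b c d) u v w z = k * contr4 T u v w z"
  unfolding contr4_def by (simp add: sum_distrib_left mult_ac)

lemma contr4_divide: "contr4 (\<lambda>a b c d. T a b c d / k) u v w z = contr4 T u v w z / k"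
  unfolding contr4_def by (simp add: sum_divide_distrib)

lemma contr4_product_13_24: "contr4 (\<lambda>a b c d. A a c * B b d) u v w z = contr2 A u w * contr2 B v z"
  unfolding contr4_def contr2_def sum_product by (simp add: mult_ac)

lemma contr4_product_14_23: "contr4 (\<lambda>a b c d. A a d * B b c) u v w z = contr2 A u z * contr2 B v w"
proof -
  have "contr2 A u z * contr2 B v w = (\<Sum>a\<in>UNIV. \<Sum>b\<in>UNIV. \<Sum>d\<in>UNIV. \<Sum>c\<in>UNIV.
      A a d * B b c * u $ a * v $ b * w $ c * z $ d)"
    unfolding contr2_def sum_product by (simp add: sum_product mult_ac)
  also have "\<dots> = contr4 (\<lambda>a b c d. A a d * B b c) u v w z"
    unfolding contr4_def by (rule sum.cong[OF refl], rule sum.cong[OF refl], rule sum.swap)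
  finally show ?thesis ..
qed

text \<open>Use \<open>contr4_swap_12\<close> only instantiated: its left-hand side matches every \<open>contr4\<close> term.\<close>

lemma contr4_swap_12:
  "contr4 (\<lambda>a b c d. T b a c d) u v w z = contr4 T v u w z"
  unfolding contr4_def by (subst sum.swap) (simp add: mult_ac)

lemma contr4_as_pair_contraction:
  "(\<Sum>a\<in>UNIV. \<Sum>e\<in>UNIV. p $ a * q $ e * (\<Sum>b\<in>UNIV. \<Sum>d\<in>UNIV. T e b a d * v $ b * z $ d))
    = contr4 T q v p z"
proof -
  have "(\<Sum>a\<in>UNIV. \<Sum>e\<in>UNIV. p $ a * q $ e * (\<Sum>b\<in>UNIV. \<Sum>d\<in>UNIV. T e b a d * v $ b * z $ d))
    = (\<Sum>a\<in>UNIV. \<Sum>e\<in>UNIV. \<Sum>b\<in>UNIV. \<Sum>d\<in>UNIV. T e b a d * q $ e * v $ b * p $ a * z $ d)"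
    by (simp add: sum_distrib_left mult_ac)
  also have "\<dots> = contr4 T q v p z"
    unfolding contr4_def by (subst sum.swap, rule sum.cong[OF refl], subst sum.swap, rule refl)
  finally show ?thesis .
qed

lemma contr4_Weyl:
  fixes g :: "real^'n::finite \<Rightarrow> real^'n^'n"
  shows "contr4 (\<lambda>a b c d. Weyl g a b c d x) u v w z = contr4 (\<lambda>a b c d. Riem_low g a b c d x) u v w z
     - (ip g x u w * contr2 (\<lambda>a b. Ric g a b x) v z - ip g x u z * contr2 (\<lambda>a b. Ric g a b x) v w
        - ip g x v w * contr2 (\<lambda>a b. Ric g a b x) u z + ip g x v z * contr2 (\<lambda>a b. Ric g a b x) u w)
       / (real CARD('n) - 2)
     + scal g x * (ip g x u w * ip g x v z - ip g x u z * ip g x v w)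
       / ((real CARD('n) - 1) * (real CARD('n) - 2))"
proof -
  let ?G = "\<lambda>a b. g x $ a $ b" and ?R = "\<lambda>a b. Ric g a b x"
  have "contr4 (\<lambda>a b c d. Weyl g a b c d x) u v w z =
    contr4 (\<lambda>a b c d. Riem_low g a b c d x
     - (?G a c * ?R b d - ?G a d * ?R b c - ?R a d * ?G b c + ?G b d * ?R a c) / (real CARD('n) - 2)
     + scal g x * (?G a c * ?G b d - ?G a d * ?G b c) / ((real CARD('n) - 1) * (real CARD('n) - 2))) u v w z"
    unfolding Weyl_def Let_def by (simp add: mult.commute)
  also have "\<dots> = contr4 (\<lambda>a b c d. Riem_low g a b c d x) u v w z
     - (contr4 (\<lambda>a b c d. ?G a c * ?R b d) u v w z - contr4 (\<lambda>a b c d. ?G a d * ?R b c) u v w z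
        - contr4 (\<lambda>a b c d. ?R a d * ?G b c) u v w z + contr4 (\<lambda>a b c d. ?G b d * ?R a c) u v w z)
       / (real CARD('n) - 2)
     + scal g x * (contr4 (\<lambda>a b c d. ?G a c * ?G b d) u v w z - contr4 (\<lambda>a b c d. ?G a d * ?G b c) u v w z)
        / ((real CARD('n) - 1) * (real CARD('n) - 2))"
    unfolding contr4_add contr4_diff contr4_divide times_divide_eq_right[symmetric] contr4_cmult ..
  also have "contr4 (\<lambda>a b c d. ?G b d * ?R a c) u v w z = contr2 ?G v z * contr2 ?R u w"
    using contr4_product_13_24[of ?R ?G u v w z] by (simp add: mult_ac)
  finally show ?thesis
    unfolding contr4_product_13_24 contr4_product_14_23 ip_eq_contr2 by (simp add: mult_ac)
qed

locale smooth_metric =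
  fixes U :: "(real^'n::finite) set" and g :: "real^'n \<Rightarrow> real^'n^'n"
  assumes open_U: "open U"
    and smooth_g: "\<And>a b. smooth_on U (\<lambda>x. g x $ a $ b)"
    and symmetric_g: "\<And>x. x \<in> U \<Longrightarrow> transpose (g x) = g x"
    and invertible_g: "\<And>x. x \<in> U \<Longrightarrow> invertible (g x)"
begin

lemma g_commute: "y \<in> U \<Longrightarrow> g y $ a $ b = g y $ b $ a"
  using arg_cong[OF symmetric_g, of y "\<lambda>M. M $ b $ a"] by (simp add: transpose_def)

lemma ginv_commute: "y \<in> U \<Longrightarrow> ginv g y $ a $ b = ginv g y $ b $ a"
  using arg_cong[OF symmetric_matrix_inv[OF invertible_g symmetric_g], of y "\<lambda>M. M $ b $ a"]
  unfolding ginv_def by (simp add: transpose_def)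

lemma g_ginv: "y \<in> U \<Longrightarrow> (\<Sum>c\<in>UNIV. g y $ a $ c * ginv g y $ c $ b) = (if a = b then 1 else 0)"
  using arg_cong[OF matrix_inv_mult(1)[OF invertible_g], of y "\<lambda>M. M $ a $ b"]
  unfolding ginv_def by (simp add: matrix_matrix_mult_def mat_def)

lemma ginv_g: "y \<in> U \<Longrightarrow> (\<Sum>c\<in>UNIV. ginv g y $ a $ c * g y $ c $ b) = (if a = b then 1 else 0)"
  using arg_cong[OF matrix_inv_mult(2)[OF invertible_g], of y "\<lambda>M. M $ a $ b"]
  unfolding ginv_def by (simp add: matrix_matrix_mult_def mat_def)

lemma differentiable_upto_g: "differentiable_upto k U (\<lambda>y. g y $ a $ b)"
  using smooth_on_imp_differentiable_upto smooth_g by blast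

lemma differentiable_g: "y \<in> U \<Longrightarrow> (\<lambda>y. g y $ a $ b) differentiable (at y)"
  using differentiable_upto_imp_differentiable[OF differentiable_upto_g open_U] by blast

lemma differentiable_pd_g: "y \<in> U \<Longrightarrow> pd k (\<lambda>y. g y $ a $ b) differentiable (at y)"
  using differentiable_upto_Suc_imp_pd_differentiable[OF differentiable_upto_g open_U] by blast

lemma differentiable_ginv: "y \<in> U \<Longrightarrow> (\<lambda>y. ginv g y $ a $ b) differentiable (at y)"
  unfolding ginv_def
  by (rule differentiable_matrix_inv_entry[OF open_U _ invertible_g differentiable_g])

lemma pd_g_commute: "y \<in> U \<Longrightarrow> pd k (\<lambda>y. g y $ a $ b) y = pd k (\<lambda>y. g y $ b $ a) y"
  by (rule pd_cong[OF open_U]) (auto intro: g_commute)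

lemma pd_pd_g_commute:
  "y \<in> U \<Longrightarrow> pd k (pd k' (\<lambda>y. g y $ a $ b)) y = pd k (pd k' (\<lambda>y. g y $ b $ a)) y"
  by (rule pd_cong[OF open_U]) (auto intro: pd_g_commute)

lemma differentiable_Gamma: "y \<in> U \<Longrightarrow> (\<lambda>y. Gamma g a b c y) differentiable (at y)"
  unfolding Gamma_def
  by (intro differentiable_mult differentiable_const differentiable_sum finite_class.finite_UNIV
      ballI differentiable_add differentiable_diff differentiable_ginv differentiable_pd_g)

lemma Gamma_commute: "y \<in> U \<Longrightarrow> Gamma g a b c y = Gamma g a c b y"
  unfolding Gamma_def using pd_g_commute[of y _ b c] by (simp add: add.commute)

lemma pd_Gamma_commute: "y \<in> U \<Longrightarrow> pd k (\<lambda>y. Gamma g a b c y) y = pd k (\<lambda>y. Gamma g a c b y) y"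
  by (rule pd_cong[OF open_U]) (auto intro: Gamma_commute)

lemma lower_Gamma:
  assumes "y \<in> U"
  shows "(\<Sum>e\<in>UNIV. g y $ a $ e * Gamma g e d b y) =
    (1/2) * (pd d (\<lambda>y. g y $ a $ b) y + pd b (\<lambda>y. g y $ a $ d) y - pd a (\<lambda>y. g y $ d $ b) y)"
proof -
  have "(\<Sum>e\<in>UNIV. g y $ a $ e * Gamma g e d b y) = (1/2) * (\<Sum>e\<in>UNIV. g y $ a $ e *
      (\<Sum>f\<in>UNIV. ginv g y $ e $ f *
        (pd d (\<lambda>y. g y $ f $ b) y + pd b (\<lambda>y. g y $ f $ d) y - pd f (\<lambda>y. g y $ d $ b) y)))"
    unfolding Gamma_def by (simp add: sum_distrib_left mult_ac)
  then show ?thesis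
    using contract_inverse[of "\<lambda>a b. g y $ a $ b" "\<lambda>a b. ginv g y $ a $ b", OF g_ginv[OF assms]]
    by simp
qed

lemma lower_pd_Gamma:
  assumes x: "x \<in> U"
  shows "(\<Sum>e\<in>UNIV. g x $ a $ e * pd c (\<lambda>y. Gamma g e d b y) x)
    = (1/2) * (pd c (pd d (\<lambda>y. g y $ a $ b)) x + pd c (pd b (\<lambda>y. g y $ a $ d)) x
               - pd c (pd a (\<lambda>y. g y $ d $ b)) x)
      - (\<Sum>e\<in>UNIV. pd c (\<lambda>y. g y $ a $ e) x * Gamma g e d b x)"
proof -
  have leibniz: "pd c (\<lambda>y. \<Sum>e\<in>UNIV. g y $ a $ e * Gamma g e d b y) x
     = (\<Sum>e\<in>UNIV. g x $ a $ e * pd c (\<lambda>y. Gamma g e d b y) x)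
       + (\<Sum>e\<in>UNIV. pd c (\<lambda>y. g y $ a $ e) x * Gamma g e d b x)"
    by (simp add: pd_sum pd_mult sum.distrib differentiable_mult differentiable_g differentiable_Gamma x)
  have "pd c (\<lambda>y. \<Sum>e\<in>UNIV. g y $ a $ e * Gamma g e d b y) x
     = pd c (\<lambda>y. (1/2) * (pd d (\<lambda>y. g y $ a $ b) y + pd b (\<lambda>y. g y $ a $ d) y
                          - pd a (\<lambda>y. g y $ d $ b) y)) x"
    by (rule pd_cong[OF open_U x]) (rule lower_Gamma)
  also have "\<dots> = (1/2) * pd c (\<lambda>y. pd d (\<lambda>y. g y $ a $ b) y + pd b (\<lambda>y. g y $ a $ d) y
                          - pd a (\<lambda>y. g y $ d $ b) y) x"
    by (rule pd_cmult) (auto intro!: differentiable_add differentiable_diff differentiable_pd_g x)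
  also have "pd c (\<lambda>y. pd d (\<lambda>y. g y $ a $ b) y + pd b (\<lambda>y. g y $ a $ d) y
                          - pd a (\<lambda>y. g y $ d $ b) y) x
      = pd c (pd d (\<lambda>y. g y $ a $ b)) x + pd c (pd b (\<lambda>y. g y $ a $ d)) x
        - pd c (pd a (\<lambda>y. g y $ d $ b)) x"
    by (simp add: pd_add pd_diff differentiable_add differentiable_pd_g x)
  finally show ?thesis using leibniz by linarith
qed

lemma Riem_low_antisym:
  assumes x: "x \<in> U"
  shows "Riem_low g a b c d x = - Riem_low g b a c d x"
  unfolding Riem_low_def Riem_def
proof (rule riemann_lowered_antisym_algebraic[where H = "\<lambda>a b. ginv g x $ a $ b"
      and dG = "\<lambda>k a b. pd k (\<lambda>y. g y $ a $ b) x" and ddG = "\<lambda>c d a b. pd c (pd d (\<lambda>y. g y $ a $ b)) x"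
      and Gl = "\<lambda>f d b. (1/2) * (pd d (\<lambda>y. g y $ f $ b) x + pd b (\<lambda>y. g y $ f $ d) x
                                 - pd f (\<lambda>y. g y $ d $ b) x)"])
  show "Gamma g e d b x = (\<Sum>f\<in>UNIV. ginv g x $ e $ f * ((1/2) * (pd d (\<lambda>y. g y $ f $ b) x
          + pd b (\<lambda>y. g y $ f $ d) x - pd f (\<lambda>y. g y $ d $ b) x)))" for e d b
    unfolding Gamma_def by (simp add: sum_distrib_left)
  show "pd c (pd d (\<lambda>y. g y $ a $ b)) x = pd d (pd c (\<lambda>y. g y $ a $ b)) x" for c d a b
    by (rule differentiable_upto_pd_commute[OF differentiable_upto_g open_U x])
qed (rule ginv_commute[OF x] g_ginv[OF x] pd_g_commute[OF x] pd_pd_g_commute[OF x]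
    lower_pd_Gamma[OF x] refl)+

lemma contr4_Riem_low_antisym:
  assumes "x \<in> U"
  shows "contr4 (\<lambda>a b c d. Riem_low g a b c d x) u v w z
     = - contr4 (\<lambda>a b c d. Riem_low g a b c d x) v u w z"
proof -
  have swap: "(\<lambda>a b c d. Riem_low g a b c d x) = (\<lambda>a b c d. (-1) * Riem_low g b a c d x)"
    by (intro ext) (subst Riem_low_antisym[OF assms], simp)
  have "contr4 (\<lambda>a b c d. Riem_low g a b c d x) u v w z
      = contr4 (\<lambda>a b c d. (-1) * Riem_low g b a c d x) u v w z"
    by (simp only: swap)
  also have "\<dots> = - contr4 (\<lambda>a b c d. Riem_low g a b c d x) v u w z"
    using contr4_swap_12[of "\<lambda>a b c d. Riem_low g a b c d x" u v w z]
    by (simp only: contr4_cmult)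
  finally show ?thesis .
qed

lemma Riem_eq_raise:
  assumes "x \<in> U"
  shows "Riem g a b c d x = (\<Sum>e\<in>UNIV. ginv g x $ a $ e * Riem_low g e b c d x)"
  unfolding Riem_low_def
  using contract_inverse[of "\<lambda>a b. ginv g x $ a $ b" "\<lambda>a b. g x $ a $ b", OF ginv_g[OF assms]]
  by simp

lemma contr2_Ric:
  assumes "x \<in> U"
  shows "contr2 (\<lambda>b d. Ric g b d x) v z = (\<Sum>a\<in>UNIV. \<Sum>e\<in>UNIV. ginv g x $ a $ e *
      (\<Sum>b\<in>UNIV. \<Sum>d\<in>UNIV. Riem_low g e b a d x * v $ b * z $ d))"
proof -
  have "contr2 (\<lambda>b d. Ric g b d x) v z = (\<Sum>b\<in>UNIV. \<Sum>d\<in>UNIV. \<Sum>a\<in>UNIV. \<Sum>e\<in>UNIV.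
      ginv g x $ a $ e * (Riem_low g e b a d x * v $ b * z $ d))"
    unfolding contr2_def Ric_def Riem_eq_raise[OF assms]
    by (simp add: sum_distrib_right sum_distrib_left mult_ac)
  also have "\<dots> = (\<Sum>a\<in>UNIV. \<Sum>e\<in>UNIV. \<Sum>b\<in>UNIV. \<Sum>d\<in>UNIV.
      ginv g x $ a $ e * (Riem_low g e b a d x * v $ b * z $ d))"
    by (subst sum.swap, subst (2) sum.swap, rule sum.cong[OF refl],
        subst sum.swap, subst (2) sum.swap, rule refl)
  finally show ?thesis by (simp add: sum_distrib_left)
qed

end

locale null_frame_field = smooth_metric U g
  for U :: "(real^'n::finite) set" and g :: "real^'n \<Rightarrow> real^'n^'n" +
  fixes l nv :: "real^'n \<Rightarrow> real^'n" and m :: "nat \<Rightarrow> real^'n \<Rightarrow> real^'n"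
  assumes smooth_l: "\<And>a. smooth_on U (\<lambda>x. l x $ a)"
    and frame: "\<And>x. x \<in> U \<Longrightarrow> null_frame g x (l x) (nv x) (\<lambda>i. m i x)"
begin

abbreviation l_low :: "'n \<Rightarrow> real^'n \<Rightarrow> real" where
  "l_low a \<equiv> \<lambda>y. \<Sum>c\<in>UNIV. g y $ a $ c * l y $ c"

lemma differentiable_l: "y \<in> U \<Longrightarrow> (\<lambda>y. l y $ a) differentiable (at y)"
  using differentiable_upto_imp_differentiable[OF smooth_on_imp_differentiable_upto[OF smooth_l] open_U]
  by blast

lemma differentiable_upto_l_low: "differentiable_upto k U (l_low a)"
  by (intro differentiable_upto_sum differentiable_upto_mult open_U finite_class.finite_UNIV
      differentiable_upto_g smooth_on_imp_differentiable_upto[OF smooth_l])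

lemma differentiable_l_low: "y \<in> U \<Longrightarrow> l_low a differentiable (at y)"
  using differentiable_upto_imp_differentiable[OF differentiable_upto_l_low open_U] by blast

lemma differentiable_pd_l_low: "y \<in> U \<Longrightarrow> pd k (l_low a) differentiable (at y)"
  using differentiable_upto_Suc_imp_pd_differentiable[OF differentiable_upto_l_low open_U] by blast

lemma differentiable_cov_low: "y \<in> U \<Longrightarrow> (\<lambda>y. cov_low g l a b y) differentiable (at y)"
  unfolding cov_low_def
  by (intro differentiable_mult differentiable_sum finite_class.finite_UNIV ballI
      differentiable_diff differentiable_pd_l_low differentiable_Gamma differentiable_l_low)

lemma ip_frame_l_nv:
  assumes "y \<in> U"
  shows "ip g y (l y) (l y) = 0" "ip g y (l y) (nv y) = 1" "ip g y (nv y) (l y) = 1"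
  using frame[OF assms] ip_commute[of g y, OF g_commute[OF assms]] unfolding null_frame_def by auto

lemma ip_frame_m:
  assumes "y \<in> U" "i \<in> {2..CARD('n)-1}"
  shows "ip g y (l y) (m i y) = 0" "ip g y (m i y) (l y) = 0" "ip g y (nv y) (m i y) = 0"
  using frame[OF assms(1)] assms(2) ip_commute[of g y, OF g_commute[OF assms(1)]]
  unfolding null_frame_def by auto

lemma frame_expansion:
  "y \<in> U \<Longrightarrow> u = ip g y (nv y) u *\<^sub>R l y + ip g y (l y) u *\<^sub>R nv y
     + (\<Sum>i\<in>{2..CARD('n)-1}. ip g y (m i y) u *\<^sub>R m i y)"
  using null_frame_expansion[of g y "l y" "nv y" "\<lambda>i. m i y", OF g_commute frame] by blast

lemma matrix_inv_g_frame:
  "x \<in> U \<Longrightarrow> ginv g x $ a $ d = l x $ a * nv x $ d + nv x $ a * l x $ d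
     + (\<Sum>k\<in>{2..CARD('n)-1}. m k x $ a * m k x $ d)"
  unfolding ginv_def by (rule matrix_inv_null_frame[OF g_commute invertible_g frame])

lemma ip_l_left: "y \<in> U \<Longrightarrow> ip g y (l y) v = (\<Sum>b\<in>UNIV. l_low b y * v $ b)"
  unfolding ip_def by (subst sum.swap) (simp add: sum_distrib_right g_commute)

lemma pd_l_low:
  "y \<in> U \<Longrightarrow> pd k (l_low a) y
     = (\<Sum>c\<in>UNIV. g y $ a $ c * pd k (\<lambda>y. l y $ c) y + pd k (\<lambda>y. g y $ a $ c) y * l y $ c)"
  by (subst pd_sum) (auto intro!: differentiable_mult differentiable_g differentiable_l sum.cong
      simp: pd_mult differentiable_g differentiable_l)

lemma Gamma_contract_l_low:
  assumes "y \<in> U"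
  shows "(\<Sum>c\<in>UNIV. Gamma g c a b y * l_low c y) = (1/2) * (\<Sum>d\<in>UNIV.
      (pd a (\<lambda>y. g y $ d $ b) y + pd b (\<lambda>y. g y $ d $ a) y - pd d (\<lambda>y. g y $ a $ b) y) * l y $ d)"
proof -
  have "(\<Sum>c\<in>UNIV. Gamma g c a b y * l_low c y) = (1/2) * (\<Sum>c\<in>UNIV. (\<Sum>d\<in>UNIV. ginv g y $ c $ d *
      (pd a (\<lambda>y. g y $ d $ b) y + pd b (\<lambda>y. g y $ d $ a) y - pd d (\<lambda>y. g y $ a $ b) y)) * l_low c y)"
    unfolding Gamma_def by (simp add: sum_distrib_left mult_ac)
  then show ?thesis
    using contract_inverse_pair[of "\<lambda>a b. g y $ a $ b" "\<lambda>a b. ginv g y $ a $ b"]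
      g_commute[OF assms] g_ginv[OF assms] by simp
qed

lemma pd_ip_l_l:
  assumes y: "y \<in> U"
  shows "2 * (\<Sum>a\<in>UNIV. \<Sum>c\<in>UNIV. l y $ a * g y $ a $ c * pd b (\<lambda>y. l y $ c) y)
     + (\<Sum>a\<in>UNIV. \<Sum>c\<in>UNIV. l y $ a * l y $ c * pd b (\<lambda>y. g y $ a $ c) y) = 0"
proof -
  have "pd b (\<lambda>y. ip g y (l y) (l y)) y = pd b (\<lambda>y. 0) y"
    by (rule pd_cong[OF open_U y]) (simp add: ip_frame_l_nv(1))
  then have "(\<Sum>a\<in>UNIV. \<Sum>c\<in>UNIV. g y $ a $ c * l y $ a * pd b (\<lambda>y. l y $ c) y
     + (g y $ a $ c * pd b (\<lambda>y. l y $ a) y + pd b (\<lambda>y. g y $ a $ c) y * l y $ a) * l y $ c) = 0"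
    unfolding ip_def
    by (simp add: pd_const pd_sum pd_mult differentiable_g[OF y] differentiable_l[OF y]
        differentiable_mult differentiable_sum)
  moreover have "(\<Sum>a\<in>UNIV. \<Sum>c\<in>UNIV. g y $ a $ c * pd b (\<lambda>y. l y $ a) y * l y $ c)
      = (\<Sum>a\<in>UNIV. \<Sum>c\<in>UNIV. l y $ a * g y $ a $ c * pd b (\<lambda>y. l y $ c) y)"
    by (subst sum.swap) (simp add: g_commute[OF y] mult_ac)
  ultimately show ?thesis by (simp add: algebra_simps sum.distrib)
qed

lemma l_contract_cov_low:
  assumes y: "y \<in> U"
  shows "(\<Sum>a\<in>UNIV. l y $ a * cov_low g l a b y) = 0"
proof -
  define X where "X = (\<Sum>a\<in>UNIV. \<Sum>c\<in>UNIV. l y $ a * l y $ c * pd b (\<lambda>y. g y $ a $ c) y)"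
  define Y where "Y = (\<Sum>a\<in>UNIV. \<Sum>c\<in>UNIV. l y $ a * g y $ a $ c * pd b (\<lambda>y. l y $ c) y)"
  have "(\<Sum>a\<in>UNIV. l y $ a * pd b (l_low a) y) = Y + X"
    unfolding pd_l_low[OF y] X_def Y_def by (simp add: sum_distrib_left sum.distrib algebra_simps)
  moreover have "(\<Sum>a\<in>UNIV. l y $ a * (\<Sum>c\<in>UNIV. Gamma g c a b y * l_low c y)) = X / 2"
  proof -
    have "(\<Sum>a\<in>UNIV. \<Sum>d\<in>UNIV. l y $ a * l y $ d * pd d (\<lambda>y. g y $ a $ b) y)
        = (\<Sum>a\<in>UNIV. \<Sum>d\<in>UNIV. l y $ a * l y $ d * pd a (\<lambda>y. g y $ d $ b) y)"
      by (subst sum.swap) (simp add: mult_ac)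
    moreover have "(\<Sum>a\<in>UNIV. \<Sum>d\<in>UNIV. l y $ a * l y $ d * pd b (\<lambda>y. g y $ d $ a) y) = X"
      unfolding X_def using pd_g_commute[OF y] by (simp add: mult_ac)
    ultimately show ?thesis unfolding Gamma_contract_l_low[OF y]
      by (simp add: sum_distrib_left sum.distrib sum_subtractf algebra_simps)
  qed
  ultimately have "(\<Sum>a\<in>UNIV. l y $ a * cov_low g l a b y) = Y + X / 2"
    unfolding cov_low_def by (simp add: right_diff_distrib sum_subtractf)
  then show ?thesis using pd_ip_l_l[OF y, of b] unfolding X_def Y_def by simp
qed

lemma contr2_cov_low_l_left:
  assumes "y \<in> U"
  shows "contr2 (\<lambda>a b. cov_low g l a b y) (l y) Q = 0"
proof -
  have "contr2 (\<lambda>a b. cov_low g l a b y) (l y) Q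
      = (\<Sum>b\<in>UNIV. (\<Sum>a\<in>UNIV. l y $ a * cov_low g l a b y) * Q $ b)"
    unfolding contr2_def by (subst sum.swap) (simp add: sum_distrib_right sum_distrib_left mult_ac)
  then show ?thesis by (simp add: l_contract_cov_low[OF assms])
qed

definition cov_low_deriv :: "'n \<Rightarrow> 'n \<Rightarrow> 'n \<Rightarrow> real^'n \<Rightarrow> real" where
  "cov_low_deriv c b d x = pd c (\<lambda>y. cov_low g l b d y) x
     - (\<Sum>e\<in>UNIV. Gamma g e c b x * cov_low g l e d x)
     - (\<Sum>e\<in>UNIV. Gamma g e c d x * cov_low g l b e x)"

lemma pd_cov_low:
  assumes x: "x \<in> U"
  shows "pd c (\<lambda>y. cov_low g l b d y) x = pd c (pd d (l_low b)) x
     - (\<Sum>e\<in>UNIV. pd c (\<lambda>y. Gamma g e b d y) x * l_low e x + Gamma g e b d x * pd c (l_low e) x)"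
proof -
  have "pd c (\<lambda>y. cov_low g l b d y) x
      = pd c (pd d (l_low b)) x - pd c (\<lambda>y. \<Sum>e\<in>UNIV. Gamma g e b d y * l_low e y) x"
    unfolding cov_low_def
    by (rule pd_diff) (auto intro!: differentiable_pd_l_low x differentiable_sum differentiable_mult
        differentiable_Gamma differentiable_l_low)
  also have "pd c (\<lambda>y. \<Sum>e\<in>UNIV. Gamma g e b d y * l_low e y) x
      = (\<Sum>e\<in>UNIV. pd c (\<lambda>y. Gamma g e b d y) x * l_low e x + Gamma g e b d x * pd c (l_low e) x)"
    by (simp add: pd_sum pd_mult differentiable_mult differentiable_Gamma differentiable_l_low x
        add.commute)
  finally show ?thesis .
qed

lemma ricci_identity:
  assumes x: "x \<in> U"
  shows "(\<Sum>f\<in>UNIV. l_low f x * Riem g f b c d x) = cov_low_deriv d b c x - cov_low_deriv c b d x"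
  unfolding Riem_def cov_low_deriv_def
proof (rule ricci_identity_algebraic[where ddlo = "\<lambda>c d b. pd c (pd d (l_low b)) x"
      and dlo = "\<lambda>c e. pd c (l_low e) x"])
  show "pd c (pd d (l_low b)) x = pd d (pd c (l_low b)) x"
    by (rule differentiable_upto_pd_commute[OF differentiable_upto_l_low open_U x])
  show "cov_low g l b d x = pd d (l_low b) x - (\<Sum>e\<in>UNIV. Gamma g e b d x * l_low e x)" for b d
    unfolding cov_low_def ..
qed (rule Gamma_commute[OF x] pd_Gamma_commute[OF x] pd_cov_low[OF x])+

lemma contr4_Riem_low_l_left:
  assumes x: "x \<in> U"
  shows "contr4 (\<lambda>a b c d. Riem_low g a b c d x) (l x) P Q S
    = (\<Sum>b\<in>UNIV. \<Sum>c\<in>UNIV. \<Sum>d\<in>UNIV. (\<Sum>f\<in>UNIV. l_low f x * Riem g f b c d x) * P $ b * Q $ c * S $ d)"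
proof -
  have lower: "(\<Sum>a\<in>UNIV. Riem_low g a b c d x * l x $ a) = (\<Sum>f\<in>UNIV. l_low f x * Riem g f b c d x)"
    for b c d
  proof -
    have "(\<Sum>a\<in>UNIV. Riem_low g a b c d x * l x $ a)
        = (\<Sum>a\<in>UNIV. \<Sum>f\<in>UNIV. g x $ f $ a * l x $ a * Riem g f b c d x)"
      unfolding Riem_low_def by (simp add: sum_distrib_left sum_distrib_right mult_ac g_commute[OF x])
    also have "\<dots> = (\<Sum>f\<in>UNIV. l_low f x * Riem g f b c d x)"
      by (subst sum.swap) (simp add: sum_distrib_right)
    finally show ?thesis .
  qed
  have "contr4 (\<lambda>a b c d. Riem_low g a b c d x) (l x) P Q S
    = (\<Sum>b\<in>UNIV. \<Sum>c\<in>UNIV. \<Sum>d\<in>UNIV. \<Sum>a\<in>UNIV. Riem_low g a b c d x * l x $ a * P $ b * Q $ c * S $ d)"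
    unfolding contr4_def
    by (subst sum.swap, rule sum.cong[OF refl], subst sum.swap, rule sum.cong[OF refl],
        subst sum.swap, rule refl)
  then show ?thesis by (simp add: sum_distrib_right[symmetric] lower)
qed

lemma contr2_Ric_frame:
  assumes x: "x \<in> U"
  shows "contr2 (\<lambda>b d. Ric g b d x) v z
    = contr4 (\<lambda>a b c d. Riem_low g a b c d x) (nv x) v (l x) z
      + contr4 (\<lambda>a b c d. Riem_low g a b c d x) (l x) v (nv x) z
      + (\<Sum>k\<in>{2..CARD('n)-1}. contr4 (\<lambda>a b c d. Riem_low g a b c d x) (m k x) v (m k x) z)"
proof -
  define C where "C a e = (\<Sum>b\<in>UNIV. \<Sum>d\<in>UNIV. Riem_low g e b a d x * v $ b * z $ d)" for a e
  have pair: "(\<Sum>a\<in>UNIV. \<Sum>e\<in>UNIV. p $ a * q $ e * C a e)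
      = contr4 (\<lambda>a b c d. Riem_low g a b c d x) q v p z" for p q
    unfolding C_def by (rule contr4_as_pair_contraction)
  have "contr2 (\<lambda>b d. Ric g b d x) v z = (\<Sum>a\<in>UNIV. \<Sum>e\<in>UNIV. ginv g x $ a $ e * C a e)"
    unfolding contr2_Ric[OF x] C_def ..
  also have "\<dots> = (\<Sum>a\<in>UNIV. \<Sum>e\<in>UNIV. l x $ a * nv x $ e * C a e)
      + (\<Sum>a\<in>UNIV. \<Sum>e\<in>UNIV. nv x $ a * l x $ e * C a e)
      + (\<Sum>a\<in>UNIV. \<Sum>e\<in>UNIV. \<Sum>k\<in>{2..CARD('n)-1}. m k x $ a * m k x $ e * C a e)"
    unfolding matrix_inv_g_frame[OF x]
    by (simp add: algebra_simps sum.distrib sum_distrib_left sum_distrib_right)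
  also have "(\<Sum>a\<in>UNIV. \<Sum>e\<in>UNIV. \<Sum>k\<in>{2..CARD('n)-1}. m k x $ a * m k x $ e * C a e)
      = (\<Sum>k\<in>{2..CARD('n)-1}. \<Sum>a\<in>UNIV. \<Sum>e\<in>UNIV. m k x $ a * m k x $ e * C a e)"
    by (subst sum.swap, rule sum.cong[OF refl], subst sum.swap, rule refl)
  finally show ?thesis unfolding pair .
qed

end

section \<open>Kundt spacetimes\<close>

locale kundt = null_frame_field U g l nv m
  for U :: "(real^'n::finite) set" and g l nv m +
  assumes kundt_i0: "\<And>x i. x \<in> U \<Longrightarrow> i \<in> {2..CARD('n)-1} \<Longrightarrow>
      contr2 (\<lambda>a b. cov_low g l a b x) (m i x) (l x) = 0"
    and kundt_ij: "\<And>x i j. x \<in> U \<Longrightarrow> i \<in> {2..CARD('n)-1} \<Longrightarrow> j \<in> {2..CARD('n)-1} \<Longrightarrow>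
      contr2 (\<lambda>a b. cov_low g l a b x) (m i x) (m j x) = 0"
begin

lemma contr2_cov_low_m_left:
  assumes y: "y \<in> U" and i: "i \<in> {2..CARD('n)-1}" and Q: "ip g y (l y) Q = 0"
  shows "contr2 (\<lambda>a b. cov_low g l a b y) (m i y) Q = 0"
  using Q kundt_i0[OF y i] kundt_ij[OF y i]
  by (subst frame_expansion[OF y, of Q]) (simp add: contr2_linear)

lemma cov_low_orthogonal:
  assumes y: "y \<in> U" and P: "ip g y (l y) P = 0" and Q: "ip g y (l y) Q = 0"
  shows "contr2 (\<lambda>a b. cov_low g l a b y) P Q = 0"
  using P contr2_cov_low_l_left[OF y] contr2_cov_low_m_left[OF y _ Q]
  by (subst frame_expansion[OF y, of P]) (simp add: contr2_linear)

lemma cov_low_split_at: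
  assumes y: "y \<in> U" and s: "s * l_low j y = 1"
  shows "cov_low g l b d y = l_low b y * (s * cov_low g l j d y)
    + (s * cov_low g l b j y - s * s * cov_low g l j j y * l_low b y) * l_low d y"
proof -
  let ?L = "\<lambda>a b. cov_low g l a b y"
  define P where "P = axis b 1 - (s * l_low b y) *\<^sub>R axis j (1::real)"
  define Q where "Q = axis d 1 - (s * l_low d y) *\<^sub>R axis j (1::real)"
  have l_axis: "ip g y (l y) (axis k 1) = l_low k y" for k
    unfolding ip_l_left[OF y] axis_def by (simp add: if_distrib cong: if_cong)
  have "ip g y (l y) P = 0" "ip g y (l y) Q = 0"
    unfolding P_def Q_def ip_diff_right ip_scale_right l_axis using s by (simp_all add: algebra_simps)
  then have "0 = contr2 ?L P Q" using cov_low_orthogonal[OF y] by simp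
  also have "\<dots> = ?L b d - s * l_low d y * ?L b j - s * l_low b y * ?L j d
      + s * l_low b y * (s * l_low d y) * ?L j j"
    unfolding P_def Q_def contr2_diff_left contr2_diff_right contr2_scale_left contr2_scale_right
      contr2_axis by (simp add: algebra_simps)
  finally show ?thesis by (simp add: algebra_simps)
qed

lemma cov_low_split:
  assumes x: "x \<in> U"
  obtains V A B where "open V" "x \<in> V" "V \<subseteq> U"
    "\<And>b. A b differentiable (at x)" "\<And>b. B b differentiable (at x)"
    "\<And>y b d. y \<in> V \<Longrightarrow> cov_low g l b d y = l_low b y * A d y + B b y * l_low d y"
proof -
  have "(\<Sum>b\<in>UNIV. l_low b x * nv x $ b) \<noteq> 0"
    using ip_frame_l_nv(2)[OF x] ip_l_left[OF x] by simp
  then obtain j where j: "l_low j x \<noteq> 0" by (metis (no_types, lifting) mult_eq_0_iff sum.neutral)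
  define V where "V = U \<inter> l_low j -` (-{0})"
  define s where "s y = 1 / l_low j y" for y
  have "open V" unfolding V_def
    by (rule continuous_open_preimage[OF differentiable_imp_continuous_on open_U])
      (use differentiable_upto_imp_differentiable_on[OF differentiable_upto_l_low] in auto)
  moreover have "x \<in> V" "V \<subseteq> U" using x j unfolding V_def by auto
  moreover have "s differentiable (at x)"
    unfolding s_def by (intro differentiable_divide differentiable_const differentiable_l_low x j)
  then have "(\<lambda>y. s y * cov_low g l j d y) differentiable (at x)"
    "(\<lambda>y. s y * cov_low g l b j y - s y * s y * cov_low g l j j y * l_low b y) differentiable (at x)"
    for b d by (auto intro!: differentiable_mult differentiable_diff differentiable_cov_low
        differentiable_l_low x)
  moreover have "cov_low g l b d y = l_low b y * (s y * cov_low g l j d y)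
    + (s y * cov_low g l b j y - s y * s y * cov_low g l j j y * l_low b y) * l_low d y"
    if "y \<in> V" for y b d
    using that by (intro cov_low_split_at) (auto simp: V_def s_def)
  ultimately show ?thesis by (rule that)
qed

lemma cov_low_deriv_orthogonal:
  assumes x: "x \<in> U"
    and P: "ip g x (l x) P = 0" and Q: "ip g x (l x) Q = 0" and S: "ip g x (l x) S = 0"
  shows "(\<Sum>c\<in>UNIV. \<Sum>b\<in>UNIV. \<Sum>d\<in>UNIV. cov_low_deriv c b d x * P $ b * Q $ c * S $ d) = 0"
proof -
  obtain V A B where V: "open V" "x \<in> V" "V \<subseteq> U"
    and A: "\<And>b. A b differentiable (at x)" and B: "\<And>b. B b differentiable (at x)"
    and split: "\<And>y b d. y \<in> V \<Longrightarrow> cov_low g l b d y = l_low b y * A d y + B b y * l_low d y"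
    using cov_low_split[OF x] by blast
  have "pd c (\<lambda>y. cov_low g l b d y) x = pd c (\<lambda>y. l_low b y * A d y + B b y * l_low d y) x"
    for c b d by (rule pd_cong[OF V(1,2)]) (rule split)
  then have pd_split: "pd c (\<lambda>y. cov_low g l b d y) x = l_low b x * pd c (A d) x
      + pd c (l_low b) x * A d x + B b x * pd c (l_low d) x + pd c (B b) x * l_low d x" for c b d
    by (simp add: pd_add pd_mult differentiable_mult differentiable_l_low x A B)
  show ?thesis unfolding cov_low_deriv_def
  proof (rule cov_deriv_split_null_contract[where lo = "\<lambda>b. l_low b x"
        and A = "\<lambda>d. A d x" and B = "\<lambda>b. B b x"])
    show "cov_low g l b d x = l_low b x * A d x + B b x * l_low d x" for b d
      using split V(2) .
    show "cov_low g l b c x = pd c (l_low b) x - (\<Sum>e\<in>UNIV. Gamma g e b c x * l_low e x)" for b c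
      unfolding cov_low_def ..
  qed (use pd_split Gamma_commute[OF x] P Q S ip_l_left[OF x] in auto)
qed

lemma Riem_l_orthogonal:
  assumes x: "x \<in> U"
    and P: "ip g x (l x) P = 0" and Q: "ip g x (l x) Q = 0" and S: "ip g x (l x) S = 0"
  shows "(\<Sum>b\<in>UNIV. \<Sum>c\<in>UNIV. \<Sum>d\<in>UNIV.
      (\<Sum>f\<in>UNIV. l_low f x * Riem g f b c d x) * P $ b * Q $ c * S $ d) = 0"
proof -
  have "(\<Sum>b\<in>UNIV. \<Sum>c\<in>UNIV. \<Sum>d\<in>UNIV. cov_low_deriv c b d x * P $ b * Q $ c * S $ d) = 0"
    using cov_low_deriv_orthogonal[OF x P Q S] by (subst sum.swap)
  moreover have "(\<Sum>b\<in>UNIV. \<Sum>c\<in>UNIV. \<Sum>d\<in>UNIV. cov_low_deriv d b c x * P $ b * Q $ c * S $ d) = 0"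
  proof -
    have "(\<Sum>b\<in>UNIV. \<Sum>c\<in>UNIV. \<Sum>d\<in>UNIV. cov_low_deriv d b c x * P $ b * Q $ c * S $ d)
        = (\<Sum>d\<in>UNIV. \<Sum>b\<in>UNIV. \<Sum>c\<in>UNIV. cov_low_deriv d b c x * P $ b * S $ d * Q $ c)"
      by (subst sum.swap, rule sum.cong[OF refl], subst sum.swap) (simp add: mult_ac)
    then show ?thesis using cov_low_deriv_orthogonal[OF x P S Q] by simp
  qed
  ultimately show ?thesis
    unfolding ricci_identity[OF x] by (simp add: left_diff_distrib sum_subtractf)
qed

lemma contr4_Riem_low_l_orthogonal:
  assumes "x \<in> U" "ip g x (l x) P = 0" "ip g x (l x) Q = 0" "ip g x (l x) S = 0"
  shows "contr4 (\<lambda>a b c d. Riem_low g a b c d x) (l x) P Q S = 0"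
  unfolding contr4_Riem_low_l_left[OF assms(1)] by (rule Riem_l_orthogonal[OF assms])

lemma contr4_Riem_low_l_nv_l_m:
  assumes x: "x \<in> U" and i: "i \<in> {2..CARD('n)-1}"
    and Ric: "contr2 (\<lambda>a b. Ric g a b x) (l x) (m i x) = 0"
  shows "contr4 (\<lambda>a b c d. Riem_low g a b c d x) (l x) (nv x) (l x) (m i x) = 0"
proof -
  let ?R = "\<lambda>u v w z. contr4 (\<lambda>a b c d. Riem_low g a b c d x) u v w z"
  have "?R (m k x) (l x) (m k x) (m i x) = 0" if "k \<in> {2..CARD('n)-1}" for k
    using contr4_Riem_low_antisym[OF x] contr4_Riem_low_l_orthogonal[OF x]
      ip_frame_m[OF x that] ip_frame_m[OF x i] by (metis neg_equal_0_iff_equal)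
  moreover have "?R (l x) (l x) (nv x) (m i x) = 0"
    using contr4_Riem_low_antisym[OF x, of "l x" "l x"] by simp
  moreover have "?R (nv x) (l x) (l x) (m i x) = - ?R (l x) (nv x) (l x) (m i x)"
    by (rule contr4_Riem_low_antisym[OF x])
  ultimately show ?thesis using Ric contr2_Ric_frame[OF x, of "l x" "m i x"] by simp
qed

end

theorem proposition2:
  fixes U :: "(real^'n::finite) set"
    and g :: "real^'n \<Rightarrow> real^'n^'n"
    and l nv :: "real^'n \<Rightarrow> real^'n"
    and m :: "nat \<Rightarrow> real^'n \<Rightarrow> real^'n"
  assumes dim: "CARD('n) \<ge> 4"
    and U_open: "open U"
    and g_smooth: "\<And>a b. smooth_on U (\<lambda>x. g x $ a $ b)"
    and g_lor: "\<And>x. x \<in> U \<Longrightarrow> lorentzian_matrix (g x)"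
    and l_smooth: "\<And>a. smooth_on U (\<lambda>x. l x $ a)"
    and frame: "\<And>x. x \<in> U \<Longrightarrow> null_frame g x (l x) (nv x) (\<lambda>i. m i x)"
    and kundt_i0: "\<And>x i. x \<in> U \<Longrightarrow> i \<in> {2..CARD('n)-1} \<Longrightarrow>
                      contr2 (\<lambda>a b. cov_low g l a b x) (m i x) (l x) = 0"
    and kundt_ij: "\<And>x i j. x \<in> U \<Longrightarrow> i \<in> {2..CARD('n)-1} \<Longrightarrow> j \<in> {2..CARD('n)-1} \<Longrightarrow>
                      contr2 (\<lambda>a b. cov_low g l a b x) (m i x) (m j x) = 0"
    and R00: "\<And>x. x \<in> U \<Longrightarrow> contr2 (\<lambda>a b. Ric g a b x) (l x) (l x) = 0"
    and R0i: "\<And>x i. x \<in> U \<Longrightarrow> i \<in> {2..CARD('n)-1} \<Longrightarrow>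
                 contr2 (\<lambda>a b. Ric g a b x) (l x) (m i x) = 0"
  shows "\<forall>x\<in>U. \<forall>i\<in>{2..CARD('n)-1}. \<forall>j\<in>{2..CARD('n)-1}. \<forall>k\<in>{2..CARD('n)-1}.
           contr4 (\<lambda>a b c d. Weyl g a b c d x) (l x) (m i x) (l x) (m j x) = 0 \<and>
           contr4 (\<lambda>a b c d. Weyl g a b c d x) (l x) (nv x) (l x) (m i x) = 0 \<and>
           contr4 (\<lambda>a b c d. Weyl g a b c d x) (l x) (m i x) (m j x) (m k x) = 0"
proof (intro ballI conjI)
  interpret kundt U g l nv m
    using U_open g_smooth g_lor l_smooth frame kundt_i0 kundt_ij
    by unfold_locales (auto intro: lorentzian_matrix_symmetric lorentzian_matrix_invertible)
  fix x i j k assume x: "x \<in> U" and i: "i \<in> {2..CARD('n)-1}" and j: "j \<in> {2..CARD('n)-1}"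
    and k: "k \<in> {2..CARD('n)-1}"
  note ips = ip_frame_l_nv[OF x] ip_frame_m[OF x i] ip_frame_m[OF x j] ip_frame_m[OF x k]
  show "contr4 (\<lambda>a b c d. Weyl g a b c d x) (l x) (m i x) (l x) (m j x) = 0"
    unfolding contr4_Weyl using contr4_Riem_low_l_orthogonal[OF x] ips R00[OF x] by simp
  show "contr4 (\<lambda>a b c d. Weyl g a b c d x) (l x) (nv x) (l x) (m i x) = 0"
    unfolding contr4_Weyl using contr4_Riem_low_l_nv_l_m[OF x i R0i[OF x i]] ips R0i[OF x i] by simp
  show "contr4 (\<lambda>a b c d. Weyl g a b c d x) (l x) (m i x) (m j x) (m k x) = 0"
    unfolding contr4_Weyl using contr4_Riem_low_l_orthogonal[OF x] ips R0i[OF x j] R0i[OF x k]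
    by simp
qed

end
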